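(* Let $u:\mathbb R\times(0,\infty)\to\mathbb R$ be twice continuously differentiable in $x$ and continuously differentiable in $t$, with $\partial_tu-\partial_x^2u=0$ on $\mathbb R\times(0,\infty)$. Suppose $u(\cdot,t)\in\mathcal A_c$ for each $t>0$, $\|u(\cdot,t)\|$ is bounded for $t\in(0,\infty)$, and $\lim_{t\to0^+}\|u(\cdot,t)-f\|=0$ for some $f\in\mathcal A_c$. Then $u(x,t)=f\ast\Theta_t(x)$ for all $(x,t)\in\mathbb R\times(0,\infty)$; i.e., $f\ast\Theta_t$ is the unique solution with these properties.
   Context: Let $\mathcal B_c$ be the set of continuous $F:\mathbb R\to\mathbb R$ such that $\lim_{x\to\pm\infty}F(x)$ exist as real numbers and $\lim_{x\to-\infty}F(x)=0$. $\mathcal A_c$ is the set of distributions $f=F'$ (distributional derivative) with $F\in\mathcal B_c$ (unique primitive); integral $\int_a^bf=F(b)-F(a)$; Alexiewicz norm $\|f\|=\sup_{x<y}|F(y)-F(x)|$. For $h$ of bounded variation, $\int_{-\infty}^\infty fh:=F(\infty)h(\infty)-\int F\,dh$ (Henstock–Stieltjes), and $f\ast h(x)=\int_{-\infty}^\infty f(\xi)h(x-\xi)\,d\xi$ in this sense. $\Theta_t(x)=(4\pi t)^{-1/2}e^{-x^2/(4t)}$, $t>0$. *)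

theory Defs
  imports "HOL-Analysis.Analysis"
begin

definition Bc :: "(real \<Rightarrow> real) set" where
  "Bc = {F. continuous_on UNIV F \<and> (\<exists>L. (F \<longlongrightarrow> L) at_top) \<and> (F \<longlongrightarrow> 0) at_bot}"

text \<open>For a continuous function g, F in B_c is the (unique) primitive of g, i.e. g = F'
  (for continuous g the distributional derivative is the pointwise one).\<close>
definition Ac_primitive :: "(real \<Rightarrow> real) \<Rightarrow> (real \<Rightarrow> real) \<Rightarrow> bool" where
  "Ac_primitive F g \<longleftrightarrow> F \<in> Bc \<and> (\<forall>x. (F has_real_derivative g x) (at x))"

definition in_Ac :: "(real \<Rightarrow> real) \<Rightarrow> bool" where
  "in_Ac g \<longleftrightarrow> (\<exists>F. Ac_primitive F g)"

definition primitive :: "(real \<Rightarrow> real) \<Rightarrow> (real \<Rightarrow> real)" where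
  "primitive g = (THE F. Ac_primitive F g)"

text \<open>Alexiewicz norm of the distribution whose primitive is F.\<close>
definition alex_norm :: "(real \<Rightarrow> real) \<Rightarrow> real" where
  "alex_norm F = (SUP p \<in> {(x, y). x < y}. \<bar>F (snd p) - F (fst p)\<bar>)"

definition heat_kernel :: "real \<Rightarrow> real \<Rightarrow> real" where
  "heat_kernel t x = (4 * pi * t) powr (-1/2) * exp (- (x^2) / (4 * t))"

text \<open>Convolution f * h (x) = F(inf) h(x - inf) - int F(xi) d[h(x - xi)], for f with primitive F,
  specialised to differentiable kernels h, where the Stieltjes integral against
  xi -> h(x - xi) is the integral of F times the derivative of xi -> h(x - xi).\<close>
definition Ac_conv :: "(real \<Rightarrow> real) \<Rightarrow> (real \<Rightarrow> real) \<Rightarrow> real \<Rightarrow> real" where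
  "Ac_conv F h x = Lim at_top F * Lim at_top (\<lambda>\<xi>. h (x - \<xi>))
     - integral UNIV (\<lambda>\<xi>. F \<xi> * deriv (\<lambda>\<eta>. h (x - \<eta>)) \<xi>)"

end

theory Submission
  imports Defs "HOL-Probability.Distributions" "HOL-Real_Asymp.Real_Asymp"
begin

text \<open>Fix \<open>T > 0\<close> and \<open>x\<close>, and let \<open>U s\<close> be the primitive of \<open>u(\<cdot>, s)\<close>. The quantity
  \<open>I(s) = \<integral> U s \<xi> \<cdot> \<partial>\<^sub>x\<Theta>\<^sub>T\<^sub>-\<^sub>s(x - \<xi>) d\<xi>\<close>, which is \<open>(u(\<cdot>, s) * \<Theta>\<^sub>T\<^sub>-\<^sub>s)(x)\<close> in the sense of \<open>\<A>\<^sub>c\<close>,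
  is constant on \<open>(0, T)\<close>. To see this, pair \<open>u(\<cdot>, s)\<close> with \<open>\<Theta>\<^sub>T\<^sub>-\<^sub>s(x - \<cdot>)\<close> times a polynomial
  cutoff of width \<open>L\<close>: after moving all space derivatives onto \<open>U s\<close>, the heat equations for
  \<open>u\<close> and for \<open>\<Theta>\<close> cancel everything except terms carrying a derivative of the cutoff, so the
  time derivative of the cutoff pairing is \<open>O(1/L)\<close>, uniformly on compact subintervals, while
  the pairing itself tends to \<open>I(s)\<close> as \<open>L \<rightarrow> \<infinity>\<close>. As \<open>s \<rightarrow> 0\<close>, \<open>I(s)\<close> tends to \<open>(f * \<Theta>\<^sub>T)(x)\<close> by
  dominated convergence, because the Alexiewicz norm controls the primitives uniformly. As
  \<open>s \<rightarrow> T\<close>, \<open>I(s)\<close> tends to \<open>u(x, T)\<close> because \<open>\<partial>\<^sub>x\<Theta>\<^sub>\<tau>\<close> has zeroth moment \<open>0\<close>, first moment \<open>1\<close> and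
  absolute second moment \<open>O(\<surd>\<tau>)\<close>, and \<open>U s\<close> is linear to first order near \<open>x\<close> with slope close
  to \<open>u(x, T)\<close>.\<close>

section \<open>The heat kernel\<close>

definition heat_kernel_dx :: "real \<Rightarrow> real \<Rightarrow> real" where
  "heat_kernel_dx t x = - (x / (2 * t)) * heat_kernel t x"

definition heat_kernel_dxx :: "real \<Rightarrow> real \<Rightarrow> real" where
  "heat_kernel_dxx t x = (x^2 / (4 * t^2) - 1 / (2 * t)) * heat_kernel t x"

definition heat_kernel_dxxx :: "real \<Rightarrow> real \<Rightarrow> real" where
  "heat_kernel_dxxx t x = (3 * x / (4 * t^2) - x^3 / (8 * t^3)) * heat_kernel t x"

lemma heat_kernel_eq: "t > 0 \<Longrightarrow> heat_kernel t x = exp (- (x^2) / (4 * t)) / sqrt (4 * pi * t)"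
  unfolding heat_kernel_def by (simp add: powr_minus powr_half_sqrt[symmetric] divide_simps)

lemma heat_kernel_eq_normal_density:
  "t > 0 \<Longrightarrow> heat_kernel t (x - \<xi>) = normal_density x (sqrt (2 * t)) \<xi>"
  unfolding heat_kernel_eq normal_density_def
  by (simp add: power2_commute real_sqrt_mult power_mult_distrib)

lemma heat_kernel_pos: "t > 0 \<Longrightarrow> heat_kernel t x > 0"
  by (simp add: heat_kernel_eq)

lemma has_real_derivative_heat_kernel:
  assumes "t > 0" shows "(heat_kernel t has_real_derivative heat_kernel_dx t x) (at x)"
proof -
  have "heat_kernel t = (\<lambda>x. exp (- (x^2) / (4 * t)) / sqrt (4 * pi * t))"
    using heat_kernel_eq[OF assms] by auto
  then show ?thesis
    unfolding heat_kernel_dx_def heat_kernel_eq[OF assms] using assms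
    by (auto intro!: derivative_eq_intros simp: field_simps)
qed

lemma has_real_derivative_heat_kernel_dx:
  assumes "t > 0" shows "(heat_kernel_dx t has_real_derivative heat_kernel_dxx t x) (at x)"
  unfolding heat_kernel_dx_def[abs_def] using assms
  by (auto intro!: derivative_eq_intros has_real_derivative_heat_kernel
           simp: heat_kernel_dx_def heat_kernel_dxx_def field_simps power2_eq_square)

lemma has_real_derivative_heat_kernel_dxx:
  assumes "t > 0" shows "(heat_kernel_dxx t has_real_derivative heat_kernel_dxxx t x) (at x)"
  unfolding heat_kernel_dxx_def[abs_def] using assms
  by (auto intro!: derivative_eq_intros has_real_derivative_heat_kernel
           simp: heat_kernel_dx_def heat_kernel_dxxx_def field_simps power2_eq_square power3_eq_cube)

lemma heat_kernel_solves_heat_equation: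
  assumes "t > 0" shows "((\<lambda>t. heat_kernel t x) has_real_derivative heat_kernel_dxx t x) (at t)"
proof -
  have "((\<lambda>s. exp (- (x^2) / (4 * s)) / sqrt (4 * pi * s)) has_real_derivative heat_kernel_dxx t x) (at t)"
    unfolding heat_kernel_dxx_def heat_kernel_eq[OF assms] using assms
    by (auto intro!: derivative_eq_intros simp: field_simps power2_eq_square real_sqrt_mult)
  then show ?thesis
    by (rule has_field_derivative_transform_within_open[where S="{0<..}"])
       (use assms heat_kernel_eq in auto)
qed

lemma has_real_derivative_reflect:
  assumes "\<And>y. (f has_real_derivative f' y) (at y)"
  shows "((\<lambda>\<xi>. f (x - \<xi>)) has_real_derivative - f' (x - \<xi>)) (at \<xi>)"
proof -
  have "((\<lambda>\<xi>. x - \<xi>) has_real_derivative -1) (at \<xi>)" by (auto intro!: derivative_eq_intros)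
  from DERIV_chain2[OF assms this] show ?thesis by simp
qed

lemma has_real_derivative_heat_kernel_reflected:
  assumes "t > 0"
  shows "((\<lambda>\<xi>. heat_kernel t (x - \<xi>)) has_real_derivative - heat_kernel_dx t (x - \<xi>)) (at \<xi>)"
    and "((\<lambda>\<xi>. - heat_kernel_dx t (x - \<xi>)) has_real_derivative heat_kernel_dxx t (x - \<xi>)) (at \<xi>)"
    and "((\<lambda>\<xi>. heat_kernel_dxx t (x - \<xi>)) has_real_derivative - heat_kernel_dxxx t (x - \<xi>)) (at \<xi>)"
  using has_real_derivative_reflect[OF has_real_derivative_heat_kernel[OF assms]]
    DERIV_minus[OF has_real_derivative_reflect[OF has_real_derivative_heat_kernel_dx[OF assms]]]
    has_real_derivative_reflect[OF has_real_derivative_heat_kernel_dxx[OF assms]]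
  by auto

lemma continuous_on_heat_kernel [continuous_intros]:
  assumes "continuous_on S f" "continuous_on S g" "\<And>x. x \<in> S \<Longrightarrow> f x > 0"
  shows "continuous_on S (\<lambda>x. heat_kernel (f x) (g x))"
  unfolding heat_kernel_def using assms by (intro continuous_intros) (auto dest: assms(3))

lemma continuous_on_heat_kernel_dx [continuous_intros]:
  assumes "continuous_on S f" "continuous_on S g" "\<And>x. x \<in> S \<Longrightarrow> f x > 0"
  shows "continuous_on S (\<lambda>x. heat_kernel_dx (f x) (g x))"
  unfolding heat_kernel_dx_def using assms by (intro continuous_intros) (auto dest: assms(3))

lemma continuous_on_heat_kernel_dxx [continuous_intros]:
  assumes "continuous_on S f" "continuous_on S g" "\<And>x. x \<in> S \<Longrightarrow> f x > 0"
  shows "continuous_on S (\<lambda>x. heat_kernel_dxx (f x) (g x))"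
  unfolding heat_kernel_dxx_def using assms by (intro continuous_intros) (auto dest: assms(3))

lemma continuous_on_heat_kernel_dxxx [continuous_intros]:
  assumes "continuous_on S f" "continuous_on S g" "\<And>x. x \<in> S \<Longrightarrow> f x > 0"
  shows "continuous_on S (\<lambda>x. heat_kernel_dxxx (f x) (g x))"
  unfolding heat_kernel_dxxx_def using assms by (intro continuous_intros) (auto dest: assms(3))

lemma heat_kernel_dx_measurable [measurable]: "(\<lambda>\<xi>. heat_kernel_dx t (x - \<xi>)) \<in> borel_measurable borel"
  unfolding heat_kernel_dx_def heat_kernel_def by measurable

lemma heat_kernel_tendsto_at_top: "t > 0 \<Longrightarrow> ((\<lambda>\<xi>. heat_kernel t (x - \<xi>)) \<longlongrightarrow> 0) at_top"
  unfolding heat_kernel_def by real_asymp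

lemma square_le_four_exp: assumes "y \<ge> (0::real)" shows "y^2 \<le> 4 * exp y"
proof -
  have "(1 + y/2)^2 \<le> (exp (y/2))^2"
    using assms by (intro power_mono exp_ge_add_one_self) auto
  also have "\<dots> = exp y" by (simp add: exp_double[symmetric])
  finally show ?thesis using assms by (simp add: power2_eq_square field_simps)
qed

lemma quartic_times_heat_kernel_le:
  assumes "t > 0" shows "(1 + x^4) * heat_kernel t x \<le> (1 + 64 * t^2) / sqrt (4 * pi * t)"
proof -
  define y where "y = x^2 / (4 * t)"
  have y: "y \<ge> 0" "x^4 = 16 * t^2 * y^2"
    using assms by (simp_all add: y_def power2_eq_square power4_eq_xxxx field_simps)
  have "y^2 * exp (- y) \<le> 4" using square_le_four_exp[OF y(1)] by (simp add: exp_minus field_simps)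
  then have "16 * t^2 * (y^2 * exp (- y)) \<le> 16 * t^2 * 4" by (intro mult_left_mono) auto
  moreover have "exp (- y) \<le> 1" using y by simp
  moreover have "(1 + x^4) * exp (- y) = exp (- y) + 16 * t^2 * (y^2 * exp (- y))"
    by (simp add: y(2) algebra_simps)
  ultimately have "(1 + x^4) * exp (- y) \<le> 1 + 64 * t^2" by linarith
  then show ?thesis using assms by (simp add: heat_kernel_eq y_def divide_right_mono)
qed

lemma abs_le_one_plus_quartic: "\<bar>x::real\<bar> \<le> 1 + x^4"
proof (cases "\<bar>x\<bar> \<le> 1")
  case False
  then have "\<bar>x\<bar> \<le> \<bar>x\<bar>^4" by (intro self_le_power) auto
  then show ?thesis by (simp add: power_even_abs)
qed (simp add: add_increasing2)

lemma cubic_le_quartic: "(1 + \<bar>x::real\<bar>) * (1 + x^2) \<le> 4 * (1 + x^4)"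
proof -
  define a where "a = \<bar>x\<bar>"
  have "x^4 = a^4" by (simp add: a_def power_even_abs)
  moreover have "(1 + a) * (1 + x^2) = 1 + a + a^2 + a^3"
    by (simp add: a_def power2_eq_square power3_eq_cube algebra_simps)
  moreover have "0 \<le> (a - 1)^2" "0 \<le> (a^2 - 1)^2" "0 \<le> a^2 * (a - 1)^2" "0 \<le> a^4" by simp_all
  ultimately show ?thesis unfolding a_def
    by (simp add: power2_eq_square power3_eq_cube power4_eq_xxxx algebra_simps del: power_even_abs)
qed

lemma abs_heat_kernel_dx_le_quartic:
  assumes "t > 0" shows "\<bar>heat_kernel_dx t x\<bar> \<le> (1 + x^4) * heat_kernel t x / (2 * t)"
proof -
  have "\<bar>heat_kernel_dx t x\<bar> = \<bar>x\<bar> * heat_kernel t x / (2 * t)"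
    unfolding heat_kernel_dx_def using assms heat_kernel_pos[OF assms, of x] by (simp add: abs_mult)
  also have "\<dots> \<le> (1 + x^4) * heat_kernel t x / (2 * t)"
    using assms abs_le_one_plus_quartic[of x] heat_kernel_pos[OF assms, of x]
    by (intro divide_right_mono mult_right_mono) auto
  finally show ?thesis .
qed

lemma weighted_abs_heat_kernel_dxx_le_quartic:
  assumes "t > 0"
  shows "(1 + \<bar>x\<bar>) * \<bar>heat_kernel_dxx t x\<bar> \<le>
    4 * (1 / (4 * t^2) + 1 / (2 * t)) * ((1 + x^4) * heat_kernel t x)"
proof -
  define q where "q = 1 / (4 * t^2) + 1 / (2 * t)"
  have h0: "0 \<le> heat_kernel t x" using heat_kernel_pos[OF assms, of x] by simp
  have q: "0 \<le> q" using assms by (simp add: q_def)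
  have "\<bar>x^2 / (4 * t^2) - 1 / (2 * t)\<bar> \<le> x^2 / (4 * t^2) + 1 / (2 * t)"
    using assms by (simp add: abs_le_iff)
  also have "\<dots> \<le> q * (1 + x^2)" using assms by (simp add: q_def field_simps)
  finally have c: "\<bar>x^2 / (4 * t^2) - 1 / (2 * t)\<bar> \<le> q * (1 + x^2)" .
  have "(1 + \<bar>x\<bar>) * \<bar>heat_kernel_dxx t x\<bar> = (1 + \<bar>x\<bar>) * \<bar>x^2 / (4 * t^2) - 1 / (2 * t)\<bar> * heat_kernel t x"
    unfolding heat_kernel_dxx_def using h0 by (simp add: abs_mult)
  also have "\<dots> \<le> (1 + \<bar>x\<bar>) * (q * (1 + x^2)) * heat_kernel t x"
    using c h0 by (intro mult_right_mono mult_left_mono) auto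
  also have "\<dots> = q * ((1 + \<bar>x\<bar>) * (1 + x^2)) * heat_kernel t x" by (simp only: mult_ac)
  also have "\<dots> \<le> q * (4 * (1 + x^4)) * heat_kernel t x"
    using cubic_le_quartic[of x] q h0 by (intro mult_right_mono mult_left_mono) auto
  also have "\<dots> = 4 * q * ((1 + x^4) * heat_kernel t x)" by (simp only: mult_ac)
  finally show ?thesis unfolding q_def .
qed

lemma heat_kernel_derivatives_uniformly_bounded:
  assumes "0 < t1"
  obtains B where "\<And>t x. t1 \<le> t \<Longrightarrow> t \<le> t2 \<Longrightarrow> heat_kernel t x \<le> B \<and>
    \<bar>heat_kernel_dx t x\<bar> \<le> B \<and> (1 + \<bar>x\<bar>) * \<bar>heat_kernel_dxx t x\<bar> \<le> B"
proof -
  define K where "K = (1 + 64 * t2^2) / sqrt (4 * pi * t1)"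
  define q where "q = 1 / (4 * t1^2) + 1 / (2 * t1)"
  have K: "K \<ge> 0" and q: "q \<ge> 0" using assms by (simp_all add: K_def q_def)
  have bounds: "heat_kernel t x \<le> K \<and> \<bar>heat_kernel_dx t x\<bar> \<le> K / (2 * t1) \<and>
      (1 + \<bar>x\<bar>) * \<bar>heat_kernel_dxx t x\<bar> \<le> 4 * q * K" if t: "t1 \<le> t" "t \<le> t2" for t x
  proof -
    have t0: "t > 0" using t assms by simp
    have h0: "0 \<le> heat_kernel t x" using heat_kernel_pos[OF t0, of x] by simp
    have "(1 + x^4) * heat_kernel t x \<le> (1 + 64 * t^2) / sqrt (4 * pi * t)"
      by (rule quartic_times_heat_kernel_le[OF t0])
    also have "\<dots> \<le> K"
      unfolding K_def using t assms
      by (intro frac_le add_left_mono mult_left_mono power_mono real_sqrt_le_mono) auto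
    finally have W: "(1 + x^4) * heat_kernel t x \<le> K" .
    have "heat_kernel t x \<le> (1 + x^4) * heat_kernel t x" using h0 by (simp add: distrib_right)
    then have k0: "heat_kernel t x \<le> K" using W by linarith
    have "\<bar>heat_kernel_dx t x\<bar> \<le> (1 + x^4) * heat_kernel t x / (2 * t)"
      by (rule abs_heat_kernel_dx_le_quartic[OF t0])
    also have "\<dots> \<le> (1 + x^4) * heat_kernel t x / (2 * t1)"
      using t assms h0 by (intro divide_left_mono) auto
    also have "\<dots> \<le> K / (2 * t1)" using W assms by (intro divide_right_mono) auto
    finally have k1: "\<bar>heat_kernel_dx t x\<bar> \<le> K / (2 * t1)" .
    have "(1 + \<bar>x\<bar>) * \<bar>heat_kernel_dxx t x\<bar> \<le> 4 * (1 / (4 * t^2) + 1 / (2 * t)) * ((1 + x^4) * heat_kernel t x)"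
      by (rule weighted_abs_heat_kernel_dxx_le_quartic[OF t0])
    also have "\<dots> \<le> 4 * q * K"
      unfolding q_def using t assms W h0
      by (intro mult_mono mult_left_mono add_mono divide_left_mono power_mono) auto
    finally show ?thesis using k0 k1 by simp
  qed
  show thesis
  proof (rule that[of "K + K / (2 * t1) + 4 * q * K"])
    fix t x assume "t1 \<le> t" "t \<le> t2"
    moreover have "0 \<le> K / (2 * t1)" "0 \<le> 4 * q * K" using K q assms by simp_all
    ultimately show "heat_kernel t x \<le> K + K / (2 * t1) + 4 * q * K \<and>
      \<bar>heat_kernel_dx t x\<bar> \<le> K + K / (2 * t1) + 4 * q * K \<and>
      (1 + \<bar>x\<bar>) * \<bar>heat_kernel_dxx t x\<bar> \<le> K + K / (2 * t1) + 4 * q * K"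
      using bounds[of t x] K by linarith
  qed
qed

lemma heat_kernel_le_twice_later:
  assumes "T / 2 \<le> t" "t \<le> T" "0 < T"
  shows "heat_kernel t x \<le> 2 * heat_kernel T x"
proof -
  have t0: "t > 0" using assms by simp
  have "sqrt (4 * pi * T) \<le> sqrt (4 * (4 * pi * t))" using assms by (intro real_sqrt_le_mono) simp
  also have "\<dots> = 2 * sqrt (4 * pi * t)" by (simp add: real_sqrt_mult)
  finally have s: "sqrt (4 * pi * T) \<le> 2 * sqrt (4 * pi * t)" .
  have e: "exp (- (x^2) / (4 * t)) \<le> exp (- (x^2) / (4 * T))"
    using assms t0 by (simp add: divide_left_mono)
  have "exp (- (x^2) / (4 * t)) * sqrt (4 * pi * T) \<le> exp (- (x^2) / (4 * T)) * (2 * sqrt (4 * pi * t))"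
    by (rule mult_mono[OF e s]) (use assms in auto)
  then show ?thesis using assms t0 by (simp add: heat_kernel_eq divide_simps mult_ac)
qed

lemma abs_heat_kernel_dx_le_later:
  assumes "T / 2 \<le> t" "t \<le> T" "0 < T"
  shows "\<bar>heat_kernel_dx t x\<bar> \<le> 4 * \<bar>heat_kernel_dx T x\<bar>"
proof -
  have t0: "t > 0" using assms by simp
  have "\<bar>heat_kernel_dx t x\<bar> = \<bar>x\<bar> / (2 * t) * heat_kernel t x"
    unfolding heat_kernel_dx_def using t0 heat_kernel_pos[OF t0, of x] by (simp add: abs_mult)
  also have "\<dots> \<le> \<bar>x\<bar> / T * (2 * heat_kernel T x)"
    using assms t0 heat_kernel_pos[OF t0, of x]
    by (intro mult_mono divide_left_mono heat_kernel_le_twice_later) auto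
  also have "\<dots> = 4 * \<bar>heat_kernel_dx T x\<bar>"
    using assms heat_kernel_pos[of T x] by (simp add: heat_kernel_dx_def abs_mult field_simps)
  finally show ?thesis .
qed

lemma abs_mult_heat_kernel_dx:
  assumes "t > 0"
  shows "\<bar>\<xi> - x\<bar> * \<bar>heat_kernel_dx t (x - \<xi>)\<bar> = (\<xi> - x) * heat_kernel_dx t (x - \<xi>)"
proof -
  have e: "heat_kernel_dx t (x - \<xi>) = (\<xi> - x) / (2 * t) * heat_kernel t (x - \<xi>)"
    by (simp add: heat_kernel_dx_def minus_divide_left)
  have "\<bar>\<xi> - x\<bar> * \<bar>heat_kernel_dx t (x - \<xi>)\<bar> = \<bar>\<xi> - x\<bar> * \<bar>\<xi> - x\<bar> / (2 * t) * heat_kernel t (x - \<xi>)"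
    using assms heat_kernel_pos[OF assms, of "x - \<xi>"] by (simp add: e abs_mult)
  then show ?thesis by (simp add: e abs_mult_self_eq)
qed

lemma heat_kernel_dx_eq_normal_density:
  "t > 0 \<Longrightarrow> heat_kernel_dx t (x - \<xi>) = (\<xi> - x) / (2 * t) * normal_density x (sqrt (2 * t)) \<xi>"
  unfolding heat_kernel_dx_def heat_kernel_eq_normal_density by (simp add: field_simps)

lemma integrable_heat_kernel: "t > 0 \<Longrightarrow> integrable lborel (\<lambda>\<xi>. heat_kernel t (x - \<xi>))"
  by (simp add: heat_kernel_eq_normal_density)

lemma integral_heat_kernel: "t > 0 \<Longrightarrow> (\<integral>\<xi>. heat_kernel t (x - \<xi>) \<partial>lborel) = 1"
  by (simp add: heat_kernel_eq_normal_density)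

lemma integral_heat_kernel_interval_le:
  assumes "t > 0" shows "integral {a..b} (\<lambda>\<xi>. heat_kernel t (x - \<xi>)) \<le> 1"
proof -
  have "integral {a..b} (\<lambda>\<xi>. heat_kernel t (x - \<xi>)) \<le> integral UNIV (\<lambda>\<xi>. heat_kernel t (x - \<xi>))"
    using assms heat_kernel_pos[OF assms]
    by (intro integral_subset_le integrable_on_lborel integrable_heat_kernel
        integrable_continuous_interval continuous_intros) (auto intro: less_imp_le)
  also have "\<dots> = 1" using assms by (simp add: integral_lborel integrable_heat_kernel integral_heat_kernel)
  finally show ?thesis .
qed

lemma integrable_abs_heat_kernel_dx:
  assumes "t > 0" shows "integrable lborel (\<lambda>\<xi>. \<bar>heat_kernel_dx t (x - \<xi>)\<bar>)"
proof -
  have "integrable lborel (\<lambda>\<xi>. 1 / (2 * t) * (normal_density x (sqrt (2 * t)) \<xi> * \<bar>\<xi> - x\<bar>^1))"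
    using integrable_normal_moment_abs[of "sqrt (2 * t)" x 1] assms by simp
  then show ?thesis
    using assms by (simp add: heat_kernel_dx_eq_normal_density abs_mult mult_ac)
qed

lemma heat_kernel_dx_moments:
  assumes "t > 0"
  shows "has_bochner_integral lborel (\<lambda>\<xi>. heat_kernel_dx t (x - \<xi>)) 0"
    and "has_bochner_integral lborel (\<lambda>\<xi>. (\<xi> - x) * heat_kernel_dx t (x - \<xi>)) 1"
    and "has_bochner_integral lborel (\<lambda>\<xi>. (\<xi> - x)^2 * \<bar>heat_kernel_dx t (x - \<xi>)\<bar>)
           (2 * sqrt (2 * t) * sqrt (2 / pi))"
proof -
  define \<sigma> where "\<sigma> = sqrt (2 * t)"
  have \<sigma>: "\<sigma> > 0" "\<sigma>^2 = 2 * t" "\<sigma>^3 = 2 * t * sqrt (2 * t)"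
    using assms by (simp_all add: \<sigma>_def power3_eq_cube)
  have dx: "heat_kernel_dx t (x - \<xi>) = 1 / (2 * t) * (normal_density x \<sigma> \<xi> * (\<xi> - x))" for \<xi>
    using heat_kernel_dx_eq_normal_density[OF assms, of x \<xi>] by (simp add: \<sigma>_def)
  show "has_bochner_integral lborel (\<lambda>\<xi>. heat_kernel_dx t (x - \<xi>)) 0"
    using has_bochner_integral_mult_right[OF normal_moment_odd[OF \<sigma>(1), of x 0], of "1 / (2 * t)"]
    by (simp add: dx)
  show "has_bochner_integral lborel (\<lambda>\<xi>. (\<xi> - x) * heat_kernel_dx t (x - \<xi>)) 1"
    using has_bochner_integral_mult_right[OF normal_moment_even[OF \<sigma>(1), of x 1], of "1 / (2 * t)"]
      assms \<sigma>(2) by (simp add: dx power2_eq_square mult_ac)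
  show "has_bochner_integral lborel (\<lambda>\<xi>. (\<xi> - x)^2 * \<bar>heat_kernel_dx t (x - \<xi>)\<bar>)
           (2 * sqrt (2 * t) * sqrt (2 / pi))"
    using has_bochner_integral_mult_right[OF normal_moment_abs_odd[OF \<sigma>(1), of x 1], of "1 / (2 * t)"]
      assms \<sigma>(3) by (simp add: dx abs_mult power2_eq_square power3_eq_cube \<sigma>_def mult_ac)
qed

lemma integral_interval_eq_lborel:
  fixes f :: "real \<Rightarrow> real"
  assumes "continuous_on {a..b} f"
  shows "integral {a..b} f = (\<integral>x. indicator {a..b} x * f x \<partial>lborel)"
  using set_borel_integral_eq_integral(2)[OF borel_integrable_atLeastAtMost'[OF assms]]
  by (simp add: set_lebesgue_integral_def)

lemma integrable_bounded_times_heat_kernel_dx: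
  assumes t: "t > 0" and [measurable]: "V \<in> borel_measurable borel" and V: "\<And>y. \<bar>V y\<bar> \<le> M"
  shows "integrable lborel (\<lambda>\<xi>. V \<xi> * heat_kernel_dx t (x - \<xi>))"
proof (rule Bochner_Integration.integrable_bound)
  show "integrable lborel (\<lambda>\<xi>. M * \<bar>heat_kernel_dx t (x - \<xi>)\<bar>)"
    using integrable_abs_heat_kernel_dx[OF t] by simp
  have "M \<ge> 0" using V[of 0] by linarith
  then show "AE \<xi> in lborel. norm (V \<xi> * heat_kernel_dx t (x - \<xi>)) \<le> norm (M * \<bar>heat_kernel_dx t (x - \<xi>)\<bar>)"
    using V by (intro AE_I2) (simp add: abs_mult mult_right_mono)
qed measurable

lemma heat_kernel_dx_tendsto_at_right_time:
  assumes "T > 0" shows "((\<lambda>s. heat_kernel_dx (T - s) y) \<longlongrightarrow> heat_kernel_dx T y) (at_right 0)"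
proof -
  have "continuous_on {0<..} (\<lambda>t. heat_kernel_dx t y)" by (intro continuous_intros) auto
  then have "isCont (\<lambda>t. heat_kernel_dx t y) T" using assms by (simp add: continuous_on_eq_continuous_at)
  moreover have "((\<lambda>s. T - s) \<longlongrightarrow> T - 0) (at_right 0)" by (intro tendsto_intros)
  ultimately show ?thesis
    using isCont_tendsto_compose[where g="\<lambda>t. heat_kernel_dx t y" and f="\<lambda>s. T - s"] by simp
qed

lemma tendsto_integral_heat_kernel_dx_at_right:
  fixes G :: "real \<Rightarrow> real \<Rightarrow> real"
  assumes T: "T > 0"
    and bounded: "\<And>s y. s > 0 \<Longrightarrow> \<bar>G s y\<bar> \<le> M"
    and [measurable]: "\<And>s. s > 0 \<Longrightarrow> G s \<in> borel_measurable borel" "H \<in> borel_measurable borel"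
    and lim: "\<And>y. ((\<lambda>s. G s y) \<longlongrightarrow> H y) (at_right 0)"
  shows "((\<lambda>s. \<integral>\<xi>. G s \<xi> * heat_kernel_dx (T - s) (x - \<xi>) \<partial>lborel) \<longlongrightarrow>
    (\<integral>\<xi>. H \<xi> * heat_kernel_dx T (x - \<xi>) \<partial>lborel)) (at_right 0)"
proof (rule tendsto_at_right_sequentially[of 0 "T / 2"])
  fix S :: "nat \<Rightarrow> real" assume S: "\<And>n. 0 < S n" "\<And>n. S n < T / 2" "S \<longlonglongrightarrow> 0"
  have S_right: "filterlim S (at_right 0) sequentially"
    using S by (intro tendsto_imp_filterlim_at_right) (auto intro: always_eventually)
  have M: "M \<ge> 0" using bounded[of 1 0] by simp
  show "(\<lambda>n. \<integral>\<xi>. G (S n) \<xi> * heat_kernel_dx (T - S n) (x - \<xi>) \<partial>lborel) \<longlonglongrightarrow>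
    (\<integral>\<xi>. H \<xi> * heat_kernel_dx T (x - \<xi>) \<partial>lborel)"
  proof (rule integral_dominated_convergence[where w="\<lambda>\<xi>. M * (4 * \<bar>heat_kernel_dx T (x - \<xi>)\<bar>)"])
    show "integrable lborel (\<lambda>\<xi>. M * (4 * \<bar>heat_kernel_dx T (x - \<xi>)\<bar>))"
      using integrable_abs_heat_kernel_dx[OF T] by simp
    show "AE \<xi> in lborel. (\<lambda>n. G (S n) \<xi> * heat_kernel_dx (T - S n) (x - \<xi>)) \<longlonglongrightarrow>
        H \<xi> * heat_kernel_dx T (x - \<xi>)"
    proof (rule AE_I2)
      fix \<xi> :: real
      have "(\<lambda>n. heat_kernel_dx (T - S n) (x - \<xi>)) \<longlonglongrightarrow> heat_kernel_dx T (x - \<xi>)"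
        by (rule filterlim_compose[OF heat_kernel_dx_tendsto_at_right_time[OF T] S_right])
      then show "(\<lambda>n. G (S n) \<xi> * heat_kernel_dx (T - S n) (x - \<xi>)) \<longlonglongrightarrow>
          H \<xi> * heat_kernel_dx T (x - \<xi>)"
        by (intro tendsto_mult filterlim_compose[OF lim S_right])
    qed
    show "AE \<xi> in lborel. norm (G (S n) \<xi> * heat_kernel_dx (T - S n) (x - \<xi>)) \<le>
        M * (4 * \<bar>heat_kernel_dx T (x - \<xi>)\<bar>)" for n
    proof (rule AE_I2)
      fix \<xi> :: real
      have "\<bar>heat_kernel_dx (T - S n) (x - \<xi>)\<bar> \<le> 4 * \<bar>heat_kernel_dx T (x - \<xi>)\<bar>"
        using S(1,2)[of n] T by (intro abs_heat_kernel_dx_le_later) auto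
      then show "norm (G (S n) \<xi> * heat_kernel_dx (T - S n) (x - \<xi>)) \<le>
          M * (4 * \<bar>heat_kernel_dx T (x - \<xi>)\<bar>)"
        unfolding real_norm_def abs_mult using bounded[OF S(1)] M by (intro mult_mono) auto
    qed
    show "(\<lambda>\<xi>. G (S n) \<xi> * heat_kernel_dx (T - S n) (x - \<xi>)) \<in> borel_measurable lborel" for n
      using S(1)[of n] by measurable
    show "(\<lambda>\<xi>. H \<xi> * heat_kernel_dx T (x - \<xi>)) \<in> borel_measurable lborel"
      by measurable
  qed
qed (use T in auto)

lemma abs_linearization_le:
  assumes F: "\<And>y. (F has_real_derivative g y) (at y)" and M: "\<And>y. \<bar>F y\<bar> \<le> M"
    and \<delta>: "\<delta> > 0" and close: "\<And>\<zeta>. \<bar>\<zeta> - x\<bar> \<le> \<delta> \<Longrightarrow> \<bar>g \<zeta> - c\<bar> \<le> \<epsilon>"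
  shows "\<bar>F \<xi> - F x - c * (\<xi> - x)\<bar> \<le> \<epsilon> * \<bar>\<xi> - x\<bar> + (2 * M / \<delta>^2 + \<bar>c\<bar> / \<delta>) * (\<xi> - x)^2"
proof -
  define D where "D = 2 * M / \<delta>^2 + \<bar>c\<bar> / \<delta>"
  have M0: "M \<ge> 0" and \<epsilon>0: "\<epsilon> \<ge> 0" using M[of x] close[of x] \<delta> by auto
  then have D0: "D \<ge> 0" using \<delta> by (simp add: D_def)
  show ?thesis
  proof (cases "\<bar>\<xi> - x\<bar> \<le> \<delta>")
    case True
    define S where "S = {min x \<xi>..max x \<xi>}"
    have "norm ((F \<xi> - c * \<xi>) - (F x - c * x)) \<le> \<epsilon> * norm (\<xi> - x)"
    proof (rule field_differentiable_bound[of S])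
      show "((\<lambda>y. F y - c * y) has_field_derivative g z - c) (at z within S)" for z
        by (auto intro!: derivative_eq_intros has_field_derivative_at_within[OF F])
      show "norm (g z - c) \<le> \<epsilon>" if "z \<in> S" for z
      proof -
        have "\<bar>z - x\<bar> \<le> \<bar>\<xi> - x\<bar>" using that unfolding S_def by (cases "x \<le> \<xi>") auto
        then show ?thesis unfolding real_norm_def using True by (intro close) simp
      qed
    qed (auto simp: S_def convex_real_interval)
    then have "\<bar>F \<xi> - F x - c * (\<xi> - x)\<bar> \<le> \<epsilon> * \<bar>\<xi> - x\<bar>" by (simp add: algebra_simps)
    moreover have "0 \<le> D * (\<xi> - x)^2" using D0 by simp
    ultimately show ?thesis unfolding D_def[symmetric] by linarith
  next
    case False
    define r where "r = \<bar>\<xi> - x\<bar>"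
    have r: "r > \<delta>" "(\<xi> - x)^2 = r^2" using False by (simp_all add: r_def)
    have "\<bar>F \<xi> - F x - c * (\<xi> - x)\<bar> \<le> \<bar>F \<xi>\<bar> + \<bar>F x\<bar> + \<bar>c\<bar> * r"
      by (simp add: r_def abs_mult[symmetric])
    also have "\<dots> \<le> 2 * M + \<bar>c\<bar> * r" using M[of \<xi>] M[of x] by simp
    also have "2 * M \<le> 2 * M * (r^2 / \<delta>^2)"
    proof -
      have "1 \<le> r^2 / \<delta>^2" using r \<delta> by (simp add: power_mono)
      then show ?thesis using M0 by (metis mult.right_neutral mult_left_mono zero_le_mult_iff zero_le_numeral)
    qed
    also have "\<bar>c\<bar> * r \<le> \<bar>c\<bar> * (r^2 / \<delta>)"
      using r \<delta> by (intro mult_left_mono) (auto simp: field_simps power2_eq_square)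
    finally have "\<bar>F \<xi> - F x - c * (\<xi> - x)\<bar> \<le> D * (\<xi> - x)^2"
      unfolding r(2) D_def by (simp add: algebra_simps)
    moreover have "0 \<le> \<epsilon> * \<bar>\<xi> - x\<bar>" using \<epsilon>0 by simp
    ultimately show ?thesis unfolding D_def[symmetric] by linarith
  qed
qed

lemma abs_integral_heat_kernel_dx_le_moments:
  assumes t: "t > 0" and [measurable]: "V \<in> borel_measurable borel"
    and V: "\<And>\<xi>. \<bar>V \<xi>\<bar> \<le> \<epsilon> * \<bar>\<xi> - x\<bar> + D * (\<xi> - x)^2"
  shows "\<bar>\<integral>\<xi>. V \<xi> * heat_kernel_dx t (x - \<xi>) \<partial>lborel\<bar> \<le> \<epsilon> + D * (2 * sqrt (2 * t) * sqrt (2 / pi))"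
proof -
  define W where "W \<xi> = \<epsilon> * ((\<xi> - x) * heat_kernel_dx t (x - \<xi>)) +
    D * ((\<xi> - x)^2 * \<bar>heat_kernel_dx t (x - \<xi>)\<bar>)" for \<xi>
  note moments = heat_kernel_dx_moments[OF t, of x]
  have W: "has_bochner_integral lborel W (\<epsilon> * 1 + D * (2 * sqrt (2 * t) * sqrt (2 / pi)))"
    unfolding W_def[abs_def] by (intro has_bochner_integral_add has_bochner_integral_mult_right moments(2,3))
  have VW: "\<bar>V \<xi> * heat_kernel_dx t (x - \<xi>)\<bar> \<le> W \<xi>" for \<xi>
  proof -
    have "\<bar>V \<xi>\<bar> * \<bar>heat_kernel_dx t (x - \<xi>)\<bar> \<le>
        (\<epsilon> * \<bar>\<xi> - x\<bar> + D * (\<xi> - x)^2) * \<bar>heat_kernel_dx t (x - \<xi>)\<bar>"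
      using V by (rule mult_right_mono) simp
    also have "\<dots> = \<epsilon> * (\<bar>\<xi> - x\<bar> * \<bar>heat_kernel_dx t (x - \<xi>)\<bar>) +
        D * ((\<xi> - x)^2 * \<bar>heat_kernel_dx t (x - \<xi>)\<bar>)" by (simp add: algebra_simps)
    also have "\<dots> = W \<xi>" by (simp only: W_def abs_mult_heat_kernel_dx[OF t])
    finally show ?thesis by (simp add: abs_mult)
  qed
  have "integrable lborel (\<lambda>\<xi>. V \<xi> * heat_kernel_dx t (x - \<xi>))"
  proof (rule Bochner_Integration.integrable_bound[OF integrable.intros[OF W]])
    show "AE \<xi> in lborel. norm (V \<xi> * heat_kernel_dx t (x - \<xi>)) \<le> norm (W \<xi>)"
      using VW by (intro AE_I2) (metis abs_ge_self order_trans real_norm_def)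
  qed measurable
  then have "\<bar>\<integral>\<xi>. V \<xi> * heat_kernel_dx t (x - \<xi>) \<partial>lborel\<bar> \<le> (\<integral>\<xi>. W \<xi> \<partial>lborel)"
    by (rule integral_abs_bound_integral[OF _ integrable.intros[OF W] VW])
  also have "\<dots> = \<epsilon> + D * (2 * sqrt (2 * t) * sqrt (2 / pi))"
    using has_bochner_integral_integral_eq[OF W] by simp
  finally show ?thesis .
qed

lemma abs_integral_heat_kernel_dx_sub_le:
  assumes t: "t > 0"
    and F: "\<And>y. (F has_real_derivative g y) (at y)" and M: "\<And>y. \<bar>F y\<bar> \<le> M"
    and \<delta>: "\<delta> > 0" and close: "\<And>\<zeta>. \<bar>\<zeta> - x\<bar> \<le> \<delta> \<Longrightarrow> \<bar>g \<zeta> - c\<bar> \<le> \<epsilon>"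
  shows "\<bar>(\<integral>\<xi>. F \<xi> * heat_kernel_dx t (x - \<xi>) \<partial>lborel) - c\<bar> \<le>
    \<epsilon> + (2 * M / \<delta>^2 + \<bar>c\<bar> / \<delta>) * (2 * sqrt (2 * t) * sqrt (2 / pi))"
proof -
  define V where "V \<xi> = F \<xi> - F x - c * (\<xi> - x)" for \<xi>
  note moments = heat_kernel_dx_moments[OF t, of x]
  have "continuous_on UNIV F" using F by (intro continuous_at_imp_continuous_on ballI DERIV_isCont) auto
  then have [measurable]: "F \<in> borel_measurable borel" by (rule borel_measurable_continuous_onI)
  have "(\<lambda>\<xi>. V \<xi> * heat_kernel_dx t (x - \<xi>)) = (\<lambda>\<xi>. F \<xi> * heat_kernel_dx t (x - \<xi>) -
      (F x * heat_kernel_dx t (x - \<xi>) + c * ((\<xi> - x) * heat_kernel_dx t (x - \<xi>))))"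
    by (auto simp: V_def fun_eq_iff algebra_simps)
  then have "(\<integral>\<xi>. V \<xi> * heat_kernel_dx t (x - \<xi>) \<partial>lborel) =
      (\<integral>\<xi>. F \<xi> * heat_kernel_dx t (x - \<xi>) \<partial>lborel) - (F x * 0 + c * 1)"
    using integrable_bounded_times_heat_kernel_dx[OF t _ M] integrable.intros[OF moments(1)]
      integrable.intros[OF moments(2)] has_bochner_integral_integral_eq[OF moments(1)]
      has_bochner_integral_integral_eq[OF moments(2)]
    by simp
  moreover have "\<bar>\<integral>\<xi>. V \<xi> * heat_kernel_dx t (x - \<xi>) \<partial>lborel\<bar> \<le>
      \<epsilon> + (2 * M / \<delta>^2 + \<bar>c\<bar> / \<delta>) * (2 * sqrt (2 * t) * sqrt (2 / pi))"
    unfolding V_def by (rule abs_integral_heat_kernel_dx_le_moments[OF t _ abs_linearization_le[OF F M \<delta> close]])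
      measurable
  ultimately show ?thesis by simp
qed

section \<open>A polynomial cutoff\<close>

definition cutoff :: "real \<Rightarrow> real \<Rightarrow> real" where
  "cutoff L x = (1 - (x / L)^2)^4"

definition cutoff_dx :: "real \<Rightarrow> real \<Rightarrow> real" where
  "cutoff_dx L x = - (8 / L) * (x / L) * (1 - (x / L)^2)^3"

definition cutoff_dxx :: "real \<Rightarrow> real \<Rightarrow> real" where
  "cutoff_dxx L x = 1 / L^2 * (48 * (x / L)^2 * (1 - (x / L)^2)^2 - 8 * (1 - (x / L)^2)^3)"

definition cutoff_dxxx :: "real \<Rightarrow> real \<Rightarrow> real" where
  "cutoff_dxxx L x = 1 / L^3 * (144 * (x / L) * (1 - (x / L)^2)^2 - 192 * (x / L)^3 * (1 - (x / L)^2))"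

lemma has_real_derivative_cutoff: "L \<noteq> 0 \<Longrightarrow> (cutoff L has_real_derivative cutoff_dx L x) (at x)"
  unfolding cutoff_def[abs_def] cutoff_dx_def
  by (rule derivative_eq_intros refl | assumption)+ (simp add: field_simps)

lemma has_real_derivative_cutoff_dx: "L \<noteq> 0 \<Longrightarrow> (cutoff_dx L has_real_derivative cutoff_dxx L x) (at x)"
  unfolding cutoff_dx_def[abs_def] cutoff_dxx_def
  by (rule derivative_eq_intros refl | assumption)+ (simp add: field_simps, algebra)

lemma has_real_derivative_cutoff_dxx: "L \<noteq> 0 \<Longrightarrow> (cutoff_dxx L has_real_derivative cutoff_dxxx L x) (at x)"
  unfolding cutoff_dxx_def[abs_def] cutoff_dxxx_def
  by (rule derivative_eq_intros refl | assumption)+ (simp add: field_simps, algebra)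

lemma continuous_on_cutoff [continuous_intros]:
  "continuous_on S (cutoff L)" "continuous_on S (cutoff_dx L)"
  "continuous_on S (cutoff_dxx L)" "continuous_on S (cutoff_dxxx L)"
  unfolding cutoff_def[abs_def] cutoff_dx_def[abs_def] cutoff_dxx_def[abs_def] cutoff_dxxx_def[abs_def]
    divide_inverse
  by (intro continuous_intros)+

lemma cutoff_measurable [measurable]: "cutoff L \<in> borel_measurable borel"
  by (intro borel_measurable_continuous_onI continuous_on_cutoff)

lemma cutoff_vanishes:
  assumes "L \<noteq> 0" "\<bar>x\<bar> = L"
  shows "cutoff L x = 0" "cutoff_dx L x = 0" "cutoff_dxx L x = 0"
proof -
  have "x^2 = L^2" using assms by (metis power2_abs)
  then have "(x / L)^2 = 1" using assms by (simp add: power_divide)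
  then show "cutoff L x = 0" "cutoff_dx L x = 0" "cutoff_dxx L x = 0"
    by (simp_all add: cutoff_def cutoff_dx_def cutoff_dxx_def)
qed

lemma cutoff_bounds:
  assumes "L > 0" "\<bar>x\<bar> \<le> L"
  shows "0 \<le> cutoff L x" "cutoff L x \<le> 1" "\<bar>cutoff_dx L x\<bar> \<le> 8 * \<bar>x\<bar> / L^2"
    "\<bar>cutoff_dxx L x\<bar> \<le> 56 / L^2" "\<bar>cutoff_dxxx L x\<bar> \<le> 336 / L^3"
proof -
  define a where "a = x / L"
  define w where "w = 1 - a^2"
  have a: "\<bar>a\<bar> \<le> 1" using assms by (simp add: a_def)
  then have w: "0 \<le> w" "w \<le> 1" using abs_le_square_iff[of a 1] by (simp_all add: w_def)
  have mono: "\<bar>a^k * w^m\<bar> \<le> 1" for k m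
    using a w by (simp add: abs_mult power_abs mult_le_one power_le_one)
  show "0 \<le> cutoff L x" "cutoff L x \<le> 1"
    using w by (simp_all add: cutoff_def a_def[symmetric] w_def[symmetric] power_le_one)
  have "\<bar>cutoff_dx L x\<bar> = 8 / L * \<bar>a\<bar> * \<bar>a^0 * w^3\<bar>"
    using assms by (simp add: cutoff_dx_def a_def[symmetric] w_def[symmetric] abs_mult)
  also have "\<dots> \<le> 8 / L * \<bar>a\<bar> * 1" using assms by (intro mult_left_mono mono) auto
  finally show "\<bar>cutoff_dx L x\<bar> \<le> 8 * \<bar>x\<bar> / L^2"
    using assms by (simp add: a_def abs_divide power2_eq_square)
  have "cutoff_dxx L x = 1 / L^2 * (48 * (a^2 * w^2) - 8 * (a^0 * w^3))"
    by (simp add: cutoff_dxx_def a_def[symmetric] w_def[symmetric])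
  moreover have "\<bar>48 * (a^2 * w^2) - 8 * (a^0 * w^3)\<bar> \<le> 48 * \<bar>a^2 * w^2\<bar> + 8 * \<bar>a^0 * w^3\<bar>"
    by (rule order_trans[OF abs_triangle_ineq4]) (simp add: abs_mult)
  ultimately have "\<bar>cutoff_dxx L x\<bar> \<le> 1 / L^2 * (48 * \<bar>a^2 * w^2\<bar> + 8 * \<bar>a^0 * w^3\<bar>)"
    by (simp add: abs_mult divide_right_mono)
  also have "\<dots> \<le> 1 / L^2 * 56" using mono[of 2 2] mono[of 0 3] by (intro mult_left_mono) auto
  finally show "\<bar>cutoff_dxx L x\<bar> \<le> 56 / L^2" by simp
  have "cutoff_dxxx L x = 1 / L^3 * (144 * (a^1 * w^2) - 192 * (a^3 * w^1))"
    by (simp add: cutoff_dxxx_def a_def[symmetric] w_def[symmetric])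
  moreover have "\<bar>144 * (a^1 * w^2) - 192 * (a^3 * w^1)\<bar> \<le> 144 * \<bar>a^1 * w^2\<bar> + 192 * \<bar>a^3 * w^1\<bar>"
    by (rule order_trans[OF abs_triangle_ineq4]) (simp add: abs_mult)
  ultimately have "\<bar>cutoff_dxxx L x\<bar> \<le> 1 / L^3 * (144 * \<bar>a^1 * w^2\<bar> + 192 * \<bar>a^3 * w^1\<bar>)"
    using assms by (simp add: abs_mult divide_right_mono)
  also have "\<dots> \<le> 1 / L^3 * 336" using assms mono[of 1 2] mono[of 3 1] by (intro mult_left_mono) auto
  finally show "\<bar>cutoff_dxxx L x\<bar> \<le> 336 / L^3" by simp
qed

lemma abs_cutoff_dx_le:
  assumes "L > 0" "\<bar>\<xi>\<bar> \<le> L" shows "\<bar>cutoff_dx L \<xi>\<bar> \<le> 8 / L"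
proof -
  have "8 * \<bar>\<xi>\<bar> / L^2 \<le> 8 * L / L^2" using assms by (intro divide_right_mono) auto
  then show ?thesis using cutoff_bounds(3)[OF assms] assms by (simp add: power2_eq_square)
qed

lemma cutoff_tendsto_one: "((\<lambda>L. cutoff L x) \<longlongrightarrow> 1) at_top"
proof -
  have "((\<lambda>L. (1 - (x / L)^2)^4) \<longlongrightarrow> (1 - 0^2)^4) at_top"
    by (intro tendsto_intros tendsto_divide_0[OF tendsto_const] filterlim_at_top_imp_at_infinity
        filterlim_ident)
  then show ?thesis by (simp add: cutoff_def)
qed

lemma abs_cutoff_heat_kernel_terms_le:
  assumes L: "L \<ge> 1" "\<bar>\<xi>\<bar> \<le> L" and t: "t > 0"
    and B: "heat_kernel t (x - \<xi>) \<le> B" "\<bar>heat_kernel_dx t (x - \<xi>)\<bar> \<le> B"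
      "(1 + \<bar>x - \<xi>\<bar>) * \<bar>heat_kernel_dxx t (x - \<xi>)\<bar> \<le> B"
  shows "\<bar>cutoff_dxxx L \<xi> * heat_kernel t (x - \<xi>) + 3 * cutoff_dxx L \<xi> * (- heat_kernel_dx t (x - \<xi>))
      + 2 * cutoff_dx L \<xi> * heat_kernel_dxx t (x - \<xi>)\<bar> \<le> (520 + 16 * \<bar>x\<bar>) * B / L^2"
proof -
  have L0: "L > 0" using L by simp
  note c = cutoff_bounds[OF L0 L(2)]
  have h0: "0 \<le> heat_kernel t (x - \<xi>)" using heat_kernel_pos[OF t] by (simp add: less_imp_le)
  have "336 / L^3 \<le> 336 / L^2" using L by (intro divide_left_mono) (auto simp: power_increasing)
  then have "\<bar>cutoff_dxxx L \<xi>\<bar> * heat_kernel t (x - \<xi>) \<le> 336 / L^2 * B"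
    using c(5) B(1) h0 by (intro mult_mono) auto
  then have t1: "\<bar>cutoff_dxxx L \<xi> * heat_kernel t (x - \<xi>)\<bar> \<le> 336 / L^2 * B"
    using h0 by (simp add: abs_mult)
  have "\<bar>cutoff_dxx L \<xi>\<bar> * \<bar>heat_kernel_dx t (x - \<xi>)\<bar> \<le> 56 / L^2 * B"
    using c(4) B(2) by (intro mult_mono) auto
  then have t2: "\<bar>3 * cutoff_dxx L \<xi> * (- heat_kernel_dx t (x - \<xi>))\<bar> \<le> 3 * (56 / L^2 * B)"
    by (simp add: abs_mult)
  have "\<bar>\<xi>\<bar> \<le> \<bar>x\<bar> + \<bar>x - \<xi>\<bar>" by linarith
  also have "\<dots> \<le> (1 + \<bar>x\<bar>) * (1 + \<bar>x - \<xi>\<bar>)" by (simp add: algebra_simps)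
  finally have "\<bar>\<xi>\<bar> * \<bar>heat_kernel_dxx t (x - \<xi>)\<bar> \<le> (1 + \<bar>x\<bar>) * ((1 + \<bar>x - \<xi>\<bar>) * \<bar>heat_kernel_dxx t (x - \<xi>)\<bar>)"
    by (simp add: mult.assoc[symmetric] mult_right_mono)
  also have "\<dots> \<le> (1 + \<bar>x\<bar>) * B" using B(3) by (intro mult_left_mono) auto
  finally have \<xi>h: "\<bar>\<xi>\<bar> * \<bar>heat_kernel_dxx t (x - \<xi>)\<bar> \<le> (1 + \<bar>x\<bar>) * B" .
  have "\<bar>cutoff_dx L \<xi>\<bar> * \<bar>heat_kernel_dxx t (x - \<xi>)\<bar> \<le> 8 * \<bar>\<xi>\<bar> / L^2 * \<bar>heat_kernel_dxx t (x - \<xi>)\<bar>"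
    using c(3) by (intro mult_right_mono) auto
  also have "\<dots> = 8 / L^2 * (\<bar>\<xi>\<bar> * \<bar>heat_kernel_dxx t (x - \<xi>)\<bar>)" by simp
  also have "\<dots> \<le> 8 / L^2 * ((1 + \<bar>x\<bar>) * B)" using \<xi>h by (intro mult_left_mono) auto
  finally have t3: "\<bar>2 * cutoff_dx L \<xi> * heat_kernel_dxx t (x - \<xi>)\<bar> \<le> 2 * (8 / L^2 * ((1 + \<bar>x\<bar>) * B))"
    by (simp add: abs_mult)
  have "(520 + 16 * \<bar>x\<bar>) * B / L^2 = 336 / L^2 * B + 3 * (56 / L^2 * B) + 2 * (8 / L^2 * ((1 + \<bar>x\<bar>) * B))"
    using L0 by (simp add: field_simps)
  then show ?thesis using t1 t2 t3 by linarith
qed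

lemma tendsto_integral_cutoff:
  fixes g :: "real \<Rightarrow> real"
  assumes g: "integrable lborel g"
  shows "(\<lambda>n. \<integral>\<xi>. indicator {-(real n + 1)..real n + 1} \<xi> * (cutoff (real n + 1) \<xi> * g \<xi>) \<partial>lborel)
    \<longlonglongrightarrow> (\<integral>\<xi>. g \<xi> \<partial>lborel)"
proof -
  define L where "L n = real n + 1" for n :: nat
  have L: "L n \<ge> 1" for n by (simp add: L_def)
  have L_top: "filterlim L at_top sequentially" unfolding L_def by real_asymp
  have [measurable]: "g \<in> borel_measurable lborel" using g by (rule borel_measurable_integrable)
  have "(\<lambda>n. \<integral>\<xi>. indicator {-L n..L n} \<xi> * (cutoff (L n) \<xi> * g \<xi>) \<partial>lborel) \<longlonglongrightarrow> (\<integral>\<xi>. g \<xi> \<partial>lborel)"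
  proof (rule integral_dominated_convergence[where w="\<lambda>\<xi>. \<bar>g \<xi>\<bar>"])
    show "AE \<xi> in lborel. (\<lambda>n. indicator {-L n..L n} \<xi> * (cutoff (L n) \<xi> * g \<xi>)) \<longlonglongrightarrow> g \<xi>"
    proof (rule AE_I2)
      fix \<xi> :: real
      obtain N :: nat where "\<bar>\<xi>\<bar> \<le> real N" using real_arch_simple by blast
      then have "eventually (\<lambda>n. cutoff (L n) \<xi> * g \<xi> = indicator {-L n..L n} \<xi> * (cutoff (L n) \<xi> * g \<xi>))
          sequentially"
        unfolding eventually_sequentially L_def by (intro exI[of _ N]) (auto simp: indicator_def)
      moreover have "(\<lambda>n. cutoff (L n) \<xi> * g \<xi>) \<longlonglongrightarrow> 1 * g \<xi>"
        by (intro tendsto_intros filterlim_compose[OF cutoff_tendsto_one L_top])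
      ultimately show "(\<lambda>n. indicator {-L n..L n} \<xi> * (cutoff (L n) \<xi> * g \<xi>)) \<longlonglongrightarrow> g \<xi>"
        by (simp add: Lim_transform_eventually)
    qed
    show "AE \<xi> in lborel. norm (indicator {-L n..L n} \<xi> * (cutoff (L n) \<xi> * g \<xi>)) \<le> \<bar>g \<xi>\<bar>" for n
    proof (rule AE_I2)
      fix \<xi> :: real
      have "\<bar>cutoff (L n) \<xi>\<bar> \<le> 1" if "\<xi> \<in> {-L n..L n}"
        using that cutoff_bounds(1,2)[of "L n" \<xi>] L[of n] by auto
      then show "norm (indicator {-L n..L n} \<xi> * (cutoff (L n) \<xi> * g \<xi>)) \<le> \<bar>g \<xi>\<bar>"
        by (auto simp: indicator_def abs_mult intro: mult_left_le_one_le)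
    qed
  qed (use g in simp_all)
  then show ?thesis by (simp add: L_def)
qed

lemma tendsto_integral_cutoff_heat_kernel_dx:
  assumes t: "t > 0" and V: "continuous_on UNIV V" "\<And>y. \<bar>V y\<bar> \<le> M"
  shows "(\<lambda>n. integral {-(real n + 1)..real n + 1}
      (\<lambda>\<xi>. V \<xi> * (cutoff (real n + 1) \<xi> * heat_kernel_dx t (x - \<xi>))))
    \<longlonglongrightarrow> (\<integral>\<xi>. V \<xi> * heat_kernel_dx t (x - \<xi>) \<partial>lborel)"
proof -
  have Vm: "V \<in> borel_measurable borel" by (rule borel_measurable_continuous_onI[OF V(1)])
  have eq: "integral {-L..L} (\<lambda>\<xi>. V \<xi> * (cutoff L \<xi> * heat_kernel_dx t (x - \<xi>))) =
      (\<integral>\<xi>. indicator {-L..L} \<xi> * (cutoff L \<xi> * (V \<xi> * heat_kernel_dx t (x - \<xi>))) \<partial>lborel)" for L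
    using t by (subst integral_interval_eq_lborel)
      (auto intro!: continuous_intros continuous_on_subset[OF V(1)] simp: mult_ac)
  show ?thesis
    unfolding eq by (rule tendsto_integral_cutoff[OF integrable_bounded_times_heat_kernel_dx[OF t Vm V(2)]])
qed

lemma tendsto_integral_cutoff_dx_heat_kernel:
  assumes t: "t > 0" and V: "continuous_on UNIV V" "\<And>y. \<bar>V y\<bar> \<le> M"
  shows "(\<lambda>n. integral {-(real n + 1)..real n + 1}
      (\<lambda>\<xi>. V \<xi> * (cutoff_dx (real n + 1) \<xi> * heat_kernel t (x - \<xi>)))) \<longlonglongrightarrow> 0"
proof (rule Lim_null_comparison)
  have M: "M \<ge> 0" using V(2)[of 0] by simp
  show "eventually (\<lambda>n. norm (integral {-(real n + 1)..real n + 1}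
      (\<lambda>\<xi>. V \<xi> * (cutoff_dx (real n + 1) \<xi> * heat_kernel t (x - \<xi>)))) \<le> 8 * M / (real n + 1)) sequentially"
  proof (intro always_eventually allI)
    fix n
    define L where "L = real n + 1"
    have L0: "L > 0" by (simp add: L_def)
    have "norm (integral {-L..L} (\<lambda>\<xi>. V \<xi> * (cutoff_dx L \<xi> * heat_kernel t (x - \<xi>)))) \<le>
        integral {-L..L} (\<lambda>\<xi>. 8 * M / L * heat_kernel t (x - \<xi>))"
    proof (rule integral_norm_bound_integral)
      fix \<xi> assume "\<xi> \<in> {-L..L}"
      moreover have h0: "0 \<le> heat_kernel t (x - \<xi>)" using heat_kernel_pos[OF t] less_imp_le by blast
      ultimately have "\<bar>V \<xi>\<bar> * (\<bar>cutoff_dx L \<xi>\<bar> * heat_kernel t (x - \<xi>)) \<le> M * (8 / L * heat_kernel t (x - \<xi>))"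
        using V(2) abs_cutoff_dx_le[OF L0] M by (intro mult_mono mult_right_mono) auto
      then show "norm (V \<xi> * (cutoff_dx L \<xi> * heat_kernel t (x - \<xi>))) \<le> 8 * M / L * heat_kernel t (x - \<xi>)"
        using h0 by (simp add: abs_mult mult_ac)
    qed (use t L0 in \<open>auto intro!: integrable_continuous_interval continuous_intros continuous_on_subset[OF V(1)]\<close>)
    also have "\<dots> = 8 * M / L * integral {-L..L} (\<lambda>\<xi>. heat_kernel t (x - \<xi>))" by simp
    also have "\<dots> \<le> 8 * M / L"
      using integral_heat_kernel_interval_le[OF t] M L0 by (intro mult_left_le) auto
    finally show "norm (integral {-(real n + 1)..real n + 1}
        (\<lambda>\<xi>. V \<xi> * (cutoff_dx (real n + 1) \<xi> * heat_kernel t (x - \<xi>)))) \<le> 8 * M / (real n + 1)"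
      by (simp add: L_def)
  qed
  show "(\<lambda>n. 8 * M / (real n + 1)) \<longlonglongrightarrow> 0" by real_asymp
qed

section \<open>Integration by parts\<close>

lemma integral_by_parts_vanishing_ends:
  fixes f g f' g' :: "real \<Rightarrow> real"
  assumes "a \<le> b"
    and f: "\<And>x. (f has_real_derivative f' x) (at x)" and g: "\<And>x. (g has_real_derivative g' x) (at x)"
    and "continuous_on {a..b} f'" "continuous_on {a..b} g'"
    and ends: "f a * g a = 0" "f b * g b = 0"
  shows "integral {a..b} (\<lambda>x. f' x * g x) = - integral {a..b} (\<lambda>x. f x * g' x)"
proof -
  have cont: "continuous_on {a..b} f" "continuous_on {a..b} g"
    using f g by (auto intro!: continuous_at_imp_continuous_on DERIV_isCont)
  have "((\<lambda>x. f x * g' x) has_integral integral {a..b} (\<lambda>x. f x * g' x)) {a..b}"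
    using assms cont by (intro integrable_integral integrable_continuous_interval continuous_intros)
  then have "((\<lambda>x. f x * g' x) has_integral
      f b * g b - f a * g a - (- integral {a..b} (\<lambda>x. f x * g' x))) {a..b}"
    unfolding ends by simp
  then have "((\<lambda>x. f' x * g x) has_integral - integral {a..b} (\<lambda>x. f x * g' x)) {a..b}"
    using f g by (intro integration_by_parts[OF bounded_bilinear_mult \<open>a \<le> b\<close> cont])
      (simp_all add: has_real_derivative_iff_has_vector_derivative[symmetric])
  then show ?thesis by (rule integral_unique)
qed

lemma integral_by_parts_thrice:
  fixes V v v' v'' c c' c'' c''' \<phi> \<phi>' \<phi>'' \<phi>''' :: "real \<Rightarrow> real"
  assumes ab: "a \<le> b"
    and dV: "\<And>x. (V has_real_derivative v x) (at x)"
    and dv: "\<And>x. (v has_real_derivative v' x) (at x)"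
    and dv': "\<And>x. (v' has_real_derivative v'' x) (at x)"
    and "continuous_on {a..b} v''"
    and dc: "\<And>x. (c has_real_derivative c' x) (at x)"
    and dc': "\<And>x. (c' has_real_derivative c'' x) (at x)"
    and dc'': "\<And>x. (c'' has_real_derivative c''' x) (at x)"
    and "continuous_on {a..b} c'''"
    and d\<phi>: "\<And>x. (\<phi> has_real_derivative \<phi>' x) (at x)"
    and d\<phi>': "\<And>x. (\<phi>' has_real_derivative \<phi>'' x) (at x)"
    and d\<phi>'': "\<And>x. (\<phi>'' has_real_derivative \<phi>''' x) (at x)"
    and "continuous_on {a..b} \<phi>'''"
    and "c a = 0" "c' a = 0" "c'' a = 0" "c b = 0" "c' b = 0" "c'' b = 0"
  shows "integral {a..b} (\<lambda>x. v'' x * (c x * \<phi> x) - v x * (c x * \<phi>'' x)) =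
    - integral {a..b} (\<lambda>x. V x * (c''' x * \<phi> x + 3 * c'' x * \<phi>' x + 2 * c' x * \<phi>'' x))"
proof -
  have cont: "continuous_on {a..b} h" if "\<And>x. (h has_real_derivative h' x) (at x)" for h h'
    using that by (intro continuous_at_imp_continuous_on ballI DERIV_isCont) auto
  note cs = cont[OF dV] cont[OF dv] cont[OF dv'] cont[OF dc] cont[OF dc'] cont[OF dc'']
    cont[OF d\<phi>] cont[OF d\<phi>'] cont[OF d\<phi>''] assms(5,9,13)
  have d1: "((\<lambda>x. c x * \<phi> x) has_real_derivative c' x * \<phi> x + c x * \<phi>' x) (at x)" for x
    by (rule derivative_eq_intros dc d\<phi> refl)+ simp
  have d2: "((\<lambda>x. c' x * \<phi> x + c x * \<phi>' x) has_real_derivative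
      c'' x * \<phi> x + 2 * c' x * \<phi>' x + c x * \<phi>'' x) (at x)" for x
    by (rule derivative_eq_intros dc dc' d\<phi> d\<phi>' refl)+ (simp add: algebra_simps)
  have d3: "((\<lambda>x. c'' x * \<phi> x + 2 * c' x * \<phi>' x) has_real_derivative
      c''' x * \<phi> x + 3 * c'' x * \<phi>' x + 2 * c' x * \<phi>'' x) (at x)" for x
    by (rule derivative_eq_intros dc' dc'' d\<phi> d\<phi>' refl)+ (simp add: algebra_simps)
  have "integral {a..b} (\<lambda>x. v'' x * (c x * \<phi> x)) =
      - integral {a..b} (\<lambda>x. v' x * (c' x * \<phi> x + c x * \<phi>' x))"
    by (rule integral_by_parts_vanishing_ends[OF ab dv' d1]) (use assms in \<open>auto intro!: continuous_intros cs\<close>)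
  also have "\<dots> = integral {a..b} (\<lambda>x. v x * (c'' x * \<phi> x + 2 * c' x * \<phi>' x + c x * \<phi>'' x))"
    by (subst integral_by_parts_vanishing_ends[OF ab dv d2]) (use assms in \<open>auto intro!: continuous_intros cs\<close>)
  also have "\<dots> = integral {a..b} (\<lambda>x. v x * (c'' x * \<phi> x + 2 * c' x * \<phi>' x)) +
      integral {a..b} (\<lambda>x. v x * (c x * \<phi>'' x))"
    by (subst integral_add[symmetric])
       (auto intro!: integrable_continuous_interval continuous_intros cs simp: algebra_simps)
  also have "integral {a..b} (\<lambda>x. v x * (c'' x * \<phi> x + 2 * c' x * \<phi>' x)) =
      - integral {a..b} (\<lambda>x. V x * (c''' x * \<phi> x + 3 * c'' x * \<phi>' x + 2 * c' x * \<phi>'' x))"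
    by (rule integral_by_parts_vanishing_ends[OF ab dV d3]) (use assms in \<open>auto intro!: continuous_intros cs\<close>)
  finally show ?thesis
    by (subst integral_diff) (auto intro!: integrable_continuous_interval continuous_intros cs)
qed

section \<open>Primitives in \<open>B\<^sub>c\<close> and the Alexiewicz norm\<close>

lemma Bc_bounded:
  assumes "F \<in> Bc" obtains B where "\<And>x. \<bar>F x\<bar> \<le> B"
proof -
  from assms obtain L where F: "continuous_on UNIV F" "(F \<longlongrightarrow> L) at_top" "(F \<longlongrightarrow> 0) at_bot"
    unfolding Bc_def by auto
  obtain X1 where X1: "\<And>x. x \<ge> X1 \<Longrightarrow> dist (F x) L < 1"
    using tendstoD[OF F(2) zero_less_one] by (auto simp: eventually_at_top_linorder)
  obtain X2 where X2: "\<And>x. x \<le> X2 \<Longrightarrow> dist (F x) 0 < 1"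
    using tendstoD[OF F(3) zero_less_one] by (auto simp: eventually_at_bot_linorder)
  have "compact (F ` {X2..X1})"
    by (rule compact_continuous_image) (use F(1) continuous_on_subset in auto)
  then have "bounded (F ` {X2..X1})" by (rule compact_imp_bounded)
  then obtain B0 where B0: "\<forall>x\<in>{X2..X1}. \<bar>F x\<bar> \<le> B0"
    unfolding bounded_iff by auto
  have "\<bar>F x\<bar> \<le> max B0 (\<bar>L\<bar> + 1)" for x
  proof (cases "x \<le> X2 \<or> x \<ge> X1")
    case True then show ?thesis using X1[of x] X2[of x] by (auto simp: dist_real_def)
  next
    case False
    then have "\<bar>F x\<bar> \<le> B0" using B0 by auto
    then show ?thesis by simp
  qed
  then show thesis by (rule that)
qed

lemma Bc_diff:
  assumes "F \<in> Bc" "G \<in> Bc" shows "(\<lambda>x. F x - G x) \<in> Bc"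
proof -
  obtain L M where "(F \<longlongrightarrow> L) at_top" "(G \<longlongrightarrow> M) at_top" using assms by (auto simp: Bc_def)
  then have "((\<lambda>x. F x - G x) \<longlongrightarrow> L - M) at_top" by (rule tendsto_diff)
  moreover have "((\<lambda>x. F x - G x) \<longlongrightarrow> 0 - 0) at_bot"
    using assms by (intro tendsto_diff) (auto simp: Bc_def)
  moreover have "continuous_on UNIV (\<lambda>x. F x - G x)"
    using assms by (intro continuous_on_diff) (auto simp: Bc_def)
  ultimately show ?thesis unfolding Bc_def by auto
qed

lemma abs_le_alex_norm:
  assumes "F \<in> Bc" shows "\<bar>F \<xi>\<bar> \<le> alex_norm F"
proof -
  obtain B where B: "\<And>x. \<bar>F x\<bar> \<le> B" using Bc_bounded[OF assms] by blast
  have "bdd_above ((\<lambda>p. \<bar>F (snd p) - F (fst p)\<bar>) ` {(x, y). x < y})"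
  proof (rule bdd_aboveI2[where M="2 * B"])
    fix p :: "real \<times> real"
    show "\<bar>F (snd p) - F (fst p)\<bar> \<le> 2 * B" using B[of "fst p"] B[of "snd p"] by linarith
  qed
  then have le: "\<bar>F \<xi> - F x\<bar> \<le> alex_norm F" if "x < \<xi>" for x
    unfolding alex_norm_def using that by (intro cSUP_upper2[of _ _ "(x, \<xi>)"]) auto
  have "((\<lambda>x. \<bar>F \<xi> - F x\<bar>) \<longlongrightarrow> \<bar>F \<xi> - 0\<bar>) at_bot"
    using assms by (intro tendsto_intros) (simp add: Bc_def)
  moreover have "eventually (\<lambda>x. \<bar>F \<xi> - F x\<bar> \<le> alex_norm F) at_bot"
    unfolding eventually_at_bot_linorder by (intro exI[of _ "\<xi> - 1"]) (auto intro: le)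
  ultimately have "\<bar>F \<xi> - 0\<bar> \<le> alex_norm F"
    by (intro tendsto_upperbound) (auto simp: trivial_limit_at_bot_linorder)
  then show ?thesis by simp
qed

lemma primitive_eqI:
  assumes "Ac_primitive F g" shows "primitive g = F"
  unfolding primitive_def
proof (rule the_equality[where P="\<lambda>F. Ac_primitive F g", OF assms])
  fix G assume G: "Ac_primitive G g"
  have "((\<lambda>x. G x - F x) has_real_derivative g x - g x) (at x)" for x
    by (rule DERIV_diff) (use G assms in \<open>auto simp: Ac_primitive_def\<close>)
  then obtain c where c: "\<And>x. G x - F x = c" using DERIV_isconst_all by (metis diff_self)
  have "((\<lambda>x. G x - F x) \<longlongrightarrow> 0 - 0) at_bot"
    using G assms by (intro tendsto_diff) (auto simp: Ac_primitive_def Bc_def)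
  then have "c = 0" by (simp add: c tendsto_const_iff[OF trivial_limit_at_bot_linorder])
  then show "G = F" using c by (auto simp: fun_eq_iff)
qed

lemma Ac_primitive_primitive: "in_Ac g \<Longrightarrow> Ac_primitive (primitive g) g"
  unfolding in_Ac_def using primitive_eqI by auto

lemma tendsto_of_alex_norm_tendsto:
  assumes "eventually (\<lambda>s. G s \<in> Bc) F" "H \<in> Bc"
    and "((\<lambda>s. alex_norm (\<lambda>x. G s x - H x)) \<longlongrightarrow> 0) F"
  shows "((\<lambda>s. G s x) \<longlongrightarrow> H x) F"
proof -
  have "eventually (\<lambda>s. norm (G s x - H x) \<le> alex_norm (\<lambda>x. G s x - H x)) F"
    using assms(1) by eventually_elim (use abs_le_alex_norm Bc_diff assms(2) in auto)
  then have "((\<lambda>s. G s x - H x) \<longlongrightarrow> 0) F" by (rule Lim_null_comparison[OF _ assms(3)])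
  then show ?thesis by (simp add: LIM_zero_iff)
qed

lemma Ac_conv_heat_kernel:
  assumes F: "F \<in> Bc" and t: "t > 0"
  shows "Ac_conv F (heat_kernel t) x = (\<integral>\<xi>. F \<xi> * heat_kernel_dx t (x - \<xi>) \<partial>lborel)"
proof -
  obtain B where B: "\<And>y. \<bar>F y\<bar> \<le> B" using Bc_bounded[OF F] by blast
  have "continuous_on UNIV F" using F by (simp add: Bc_def)
  then have "F \<in> borel_measurable borel" by (rule borel_measurable_continuous_onI)
  then have "integrable lborel (\<lambda>\<xi>. F \<xi> * heat_kernel_dx t (x - \<xi>))"
    by (rule integrable_bounded_times_heat_kernel_dx[OF t _ B])
  moreover have "Lim at_top (\<lambda>\<xi>. heat_kernel t (x - \<xi>)) = 0"
    by (rule tendsto_Lim[OF trivial_limit_at_top_linorder heat_kernel_tendsto_at_top[OF t]])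
  moreover have "deriv (\<lambda>\<eta>. heat_kernel t (x - \<eta>)) \<xi> = - heat_kernel_dx t (x - \<xi>)" for \<xi>
    by (rule DERIV_imp_deriv[OF has_real_derivative_heat_kernel_reflected(1)[OF t]])
  ultimately show ?thesis
    unfolding Ac_conv_def by (simp add: integral_lborel)
qed

section \<open>Solutions with bounded primitives\<close>

lemma continuous_on_swap:
  assumes "continuous_on (UNIV \<times> {0<..}) (\<lambda>(x, t). w x t)" "S \<subseteq> {0<..}"
  shows "continuous_on (S \<times> A) (\<lambda>p. w (snd p) (fst p))"
proof -
  have "continuous_on (S \<times> A) ((\<lambda>(x, t). w x t) \<circ> (\<lambda>p. (snd p, fst p)))"
    by (rule continuous_on_compose[OF _ continuous_on_subset[OF assms(1)]])
       (use assms(2) in \<open>auto intro!: continuous_intros\<close>)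
  then show ?thesis by (simp add: o_def)
qed

locale heat_solution =
  fixes u ux uxx ut U :: "real \<Rightarrow> real \<Rightarrow> real" and M :: real and f :: "real \<Rightarrow> real"
  assumes cont_u: "continuous_on (UNIV \<times> {0<..}) (\<lambda>(x, t). u x t)"
    and cont_uxx: "continuous_on (UNIV \<times> {0<..}) (\<lambda>(x, t). uxx x t)"
    and cont_ut: "continuous_on (UNIV \<times> {0<..}) (\<lambda>(x, t). ut x t)"
    and der_x: "\<And>x t. t > 0 \<Longrightarrow> ((\<lambda>y. u y t) has_real_derivative ux x t) (at x)"
    and der_xx: "\<And>x t. t > 0 \<Longrightarrow> ((\<lambda>y. ux y t) has_real_derivative uxx x t) (at x)"
    and der_t: "\<And>x t. t > 0 \<Longrightarrow> ((\<lambda>s. u x s) has_real_derivative ut x t) (at t)"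
    and heat: "\<And>x t. t > 0 \<Longrightarrow> ut x t = uxx x t"
    and der_U: "\<And>x t. t > 0 \<Longrightarrow> (U t has_real_derivative u x t) (at x)"
    and U_bounded: "\<And>x t. t > 0 \<Longrightarrow> \<bar>U t x\<bar> \<le> M"
    and U_initial: "\<And>x. ((\<lambda>t. U t x) \<longlongrightarrow> f x) (at_right 0)"
    and f_cont: "continuous_on UNIV f"
begin

text \<open>\<open>propagated T x s\<close> is \<open>(u(\<cdot>, s) * \<Theta>\<^sub>T\<^sub>-\<^sub>s)(x)\<close>, the convolution being taken in the sense
  of \<open>\<A>\<^sub>c\<close>, i.e. integrated by parts onto the primitive \<open>U s\<close>.\<close>

definition propagated :: "real \<Rightarrow> real \<Rightarrow> real \<Rightarrow> real" where
  "propagated T x s = (\<integral>\<xi>. U s \<xi> * heat_kernel_dx (T - s) (x - \<xi>) \<partial>lborel)"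

definition cutoff_propagated :: "real \<Rightarrow> real \<Rightarrow> real \<Rightarrow> real \<Rightarrow> real" where
  "cutoff_propagated T x L s = integral {-L..L} (\<lambda>\<xi>. u \<xi> s * (cutoff L \<xi> * heat_kernel (T - s) (x - \<xi>)))"

lemma M_nonneg: "M \<ge> 0"
  using U_bounded[of 1 0] by simp

lemma continuous_on_U: "t > 0 \<Longrightarrow> continuous_on S (U t)"
  by (intro continuous_at_imp_continuous_on ballI DERIV_isCont[OF der_U]) auto

lemma U_measurable [measurable]: "t > 0 \<Longrightarrow> U t \<in> borel_measurable borel"
  by (rule borel_measurable_continuous_onI[OF continuous_on_U])

lemma continuous_on_u: "t > 0 \<Longrightarrow> continuous_on S (\<lambda>x. u x t)"
  by (intro continuous_at_imp_continuous_on ballI DERIV_isCont[OF der_x]) auto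

lemma has_real_derivative_cutoff_integrand:
  assumes "0 < s" "s < T"
  shows "((\<lambda>s. u \<xi> s * (cutoff L \<xi> * heat_kernel (T - s) (x - \<xi>))) has_real_derivative
    ut \<xi> s * (cutoff L \<xi> * heat_kernel (T - s) (x - \<xi>)) -
    u \<xi> s * (cutoff L \<xi> * heat_kernel_dxx (T - s) (x - \<xi>))) (at s)"
proof -
  have s: "s > 0" "T - s > 0" using assms by auto
  have "((\<lambda>s. T - s) has_real_derivative -1) (at s)" by (auto intro!: derivative_eq_intros)
  note DERIV_chain2[where f="\<lambda>t. heat_kernel t (x - \<xi>)",
      OF heat_kernel_solves_heat_equation[OF s(2)] this]
  note DERIV_mult[OF der_t[OF s(1)] DERIV_cmult[OF this, of "cutoff L \<xi>"]]
  then show ?thesis by (rule DERIV_cong) (simp add: algebra_simps)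
qed

lemma has_real_derivative_cutoff_propagated:
  assumes "0 < s" "s < T"
  shows "(cutoff_propagated T x L has_real_derivative integral {-L..L} (\<lambda>\<xi>.
      ut \<xi> s * (cutoff L \<xi> * heat_kernel (T - s) (x - \<xi>)) -
      u \<xi> s * (cutoff L \<xi> * heat_kernel_dxx (T - s) (x - \<xi>)))) (at s)"
proof -
  let ?I = "{0<..<T}"
  have "((\<lambda>s. u \<xi> s * (cutoff L \<xi> * heat_kernel (T - s) (x - \<xi>))) has_real_derivative
      ut \<xi> s * (cutoff L \<xi> * heat_kernel (T - s) (x - \<xi>)) -
      u \<xi> s * (cutoff L \<xi> * heat_kernel_dxx (T - s) (x - \<xi>))) (at s within ?I)"
    if "s \<in> ?I" for s \<xi>
    using that by (intro has_field_derivative_at_within[OF has_real_derivative_cutoff_integrand]) auto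
  moreover have "(\<lambda>\<xi>. u \<xi> s * (cutoff L \<xi> * heat_kernel (T - s) (x - \<xi>))) integrable_on cbox (-L) L"
    if "s \<in> ?I" for s
    unfolding cbox_interval using that
    by (intro integrable_continuous_interval continuous_intros continuous_on_u) auto
  moreover have "continuous_on (?I \<times> cbox (-L) L) (\<lambda>(s, \<xi>).
      ut \<xi> s * (cutoff L \<xi> * heat_kernel (T - s) (x - \<xi>)) -
      u \<xi> s * (cutoff L \<xi> * heat_kernel_dxx (T - s) (x - \<xi>)))"
  proof -
    have I: "?I \<subseteq> {0<..}" by auto
    have "continuous_on (?I \<times> cbox (-L) L) (\<lambda>p. ut (snd p) (fst p))"
      by (rule continuous_on_swap[OF cont_ut I])
    moreover have "continuous_on (?I \<times> cbox (-L) L) (\<lambda>p. u (snd p) (fst p))"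
      by (rule continuous_on_swap[OF cont_u I])
    moreover have "continuous_on (?I \<times> cbox (-L) L) (\<lambda>p. cutoff L (snd p))"
      by (rule continuous_on_compose2[OF continuous_on_cutoff(1)[of UNIV L]]) (auto intro!: continuous_intros)
    ultimately show ?thesis
      unfolding split_beta' by (intro continuous_intros) auto
  qed
  ultimately have "(cutoff_propagated T x L has_real_derivative integral (cbox (-L) L) (\<lambda>\<xi>.
      ut \<xi> s * (cutoff L \<xi> * heat_kernel (T - s) (x - \<xi>)) -
      u \<xi> s * (cutoff L \<xi> * heat_kernel_dxx (T - s) (x - \<xi>)))) (at s within ?I)"
    unfolding cutoff_propagated_def[abs_def] cbox_interval[symmetric]
    by (rule leibniz_rule_field_derivative) (use assms in auto)
  then show ?thesis using at_within_open[of s ?I] assms by (auto simp: cbox_interval)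
qed

text \<open>Moving all derivatives onto \<open>U\<close>, the heat equations for \<open>u\<close> and for \<open>\<Theta>\<close> cancel the terms
  without a derivative of the cutoff.\<close>

lemma cutoff_propagated_derivative_eq:
  assumes "0 < s" "s < T" "L > 0"
  shows "integral {-L..L} (\<lambda>\<xi>. ut \<xi> s * (cutoff L \<xi> * heat_kernel (T - s) (x - \<xi>)) -
      u \<xi> s * (cutoff L \<xi> * heat_kernel_dxx (T - s) (x - \<xi>))) =
    - integral {-L..L} (\<lambda>\<xi>. U s \<xi> * (cutoff_dxxx L \<xi> * heat_kernel (T - s) (x - \<xi>) +
      3 * cutoff_dxx L \<xi> * (- heat_kernel_dx (T - s) (x - \<xi>)) +
      2 * cutoff_dx L \<xi> * heat_kernel_dxx (T - s) (x - \<xi>)))"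
proof -
  have t: "T - s > 0" and L: "L \<noteq> 0" using assms by auto
  have "continuous_on {-L..L} (\<lambda>\<xi>. uxx \<xi> s)"
    by (rule continuous_on_compose2[OF cont_uxx, of _ "\<lambda>\<xi>. (\<xi>, s)", simplified])
       (use assms in \<open>auto intro!: continuous_intros\<close>)
  moreover have "continuous_on {-L..L} (\<lambda>\<xi>. - heat_kernel_dxxx (T - s) (x - \<xi>))"
    using t by (intro continuous_intros) auto
  ultimately show ?thesis
    using heat[OF assms(1)] cutoff_vanishes[OF L, of "-L"] cutoff_vanishes[OF L, of L] assms
      integral_by_parts_thrice[of "-L" L "U s" "\<lambda>\<xi>. u \<xi> s" "\<lambda>\<xi>. ux \<xi> s" "\<lambda>\<xi>. uxx \<xi> s"
        "cutoff L" "cutoff_dx L" "cutoff_dxx L" "cutoff_dxxx L" "\<lambda>\<xi>. heat_kernel (T - s) (x - \<xi>)"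
        "\<lambda>\<xi>. - heat_kernel_dx (T - s) (x - \<xi>)" "\<lambda>\<xi>. heat_kernel_dxx (T - s) (x - \<xi>)"
        "\<lambda>\<xi>. - heat_kernel_dxxx (T - s) (x - \<xi>)",
        OF _ der_U[OF assms(1)] der_x[OF assms(1)] der_xx[OF assms(1)] _
        has_real_derivative_cutoff[OF L] has_real_derivative_cutoff_dx[OF L]
        has_real_derivative_cutoff_dxx[OF L] continuous_on_cutoff(4)
        has_real_derivative_heat_kernel_reflected[OF t]]
    by simp
qed

lemma cutoff_propagated_eq:
  assumes "0 < s" "s < T" "L > 0"
  shows "cutoff_propagated T x L s =
    integral {-L..L} (\<lambda>\<xi>. U s \<xi> * (cutoff L \<xi> * heat_kernel_dx (T - s) (x - \<xi>))) -
    integral {-L..L} (\<lambda>\<xi>. U s \<xi> * (cutoff_dx L \<xi> * heat_kernel (T - s) (x - \<xi>)))"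
proof -
  have t: "T - s > 0" and L: "L \<noteq> 0" using assms by auto
  have "((\<lambda>\<xi>. cutoff L \<xi> * heat_kernel (T - s) (x - \<xi>)) has_real_derivative
      cutoff_dx L \<xi> * heat_kernel (T - s) (x - \<xi>) - cutoff L \<xi> * heat_kernel_dx (T - s) (x - \<xi>)) (at \<xi>)"
    for \<xi>
    by (rule derivative_eq_intros has_real_derivative_cutoff[OF L]
        has_real_derivative_heat_kernel_reflected(1)[OF t] refl)+ simp
  note dg = this
  have "cutoff_propagated T x L s = - integral {-L..L} (\<lambda>\<xi>. U s \<xi> *
      (cutoff_dx L \<xi> * heat_kernel (T - s) (x - \<xi>) - cutoff L \<xi> * heat_kernel_dx (T - s) (x - \<xi>)))"
    unfolding cutoff_propagated_def
    by (rule integral_by_parts_vanishing_ends[OF _ der_U[OF assms(1)] dg])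
       (use assms t cutoff_vanishes[OF L, of "-L"] cutoff_vanishes[OF L, of L]
         in \<open>auto intro!: continuous_intros continuous_on_U continuous_on_u\<close>)
  also have "\<dots> = integral {-L..L} (\<lambda>\<xi>. U s \<xi> * (cutoff L \<xi> * heat_kernel_dx (T - s) (x - \<xi>)) -
      U s \<xi> * (cutoff_dx L \<xi> * heat_kernel (T - s) (x - \<xi>)))"
    unfolding integral_neg[symmetric] by (rule integral_cong) (simp add: algebra_simps)
  also have "\<dots> = integral {-L..L} (\<lambda>\<xi>. U s \<xi> * (cutoff L \<xi> * heat_kernel_dx (T - s) (x - \<xi>))) -
    integral {-L..L} (\<lambda>\<xi>. U s \<xi> * (cutoff_dx L \<xi> * heat_kernel (T - s) (x - \<xi>)))"
    using t by (intro integral_diff integrable_continuous_interval continuous_intros continuous_on_U assms) auto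
  finally show ?thesis .
qed

lemma abs_cutoff_propagated_derivative_le:
  assumes s: "0 < s" "s < T" and L: "L \<ge> 1"
    and B: "\<And>\<xi>. heat_kernel (T - s) (x - \<xi>) \<le> B \<and> \<bar>heat_kernel_dx (T - s) (x - \<xi>)\<bar> \<le> B \<and>
      (1 + \<bar>x - \<xi>\<bar>) * \<bar>heat_kernel_dxx (T - s) (x - \<xi>)\<bar> \<le> B"
  shows "\<bar>integral {-L..L} (\<lambda>\<xi>. ut \<xi> s * (cutoff L \<xi> * heat_kernel (T - s) (x - \<xi>)) -
      u \<xi> s * (cutoff L \<xi> * heat_kernel_dxx (T - s) (x - \<xi>)))\<bar> \<le> 2 * M * ((520 + 16 * \<bar>x\<bar>) * B) / L"
proof -
  have L0: "L > 0" and t: "T - s > 0" using L s by auto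
  have B0: "B \<ge> 0" using B[of 0] heat_kernel_pos[OF t, of x] by linarith
  define g where "g \<xi> = U s \<xi> * (cutoff_dxxx L \<xi> * heat_kernel (T - s) (x - \<xi>) +
      3 * cutoff_dxx L \<xi> * (- heat_kernel_dx (T - s) (x - \<xi>)) +
      2 * cutoff_dx L \<xi> * heat_kernel_dxx (T - s) (x - \<xi>))" for \<xi>
  have "(g has_integral integral {-L..L} g) (cbox (-L) L)"
    unfolding cbox_interval g_def using t
    by (intro integrable_integral integrable_continuous_interval continuous_intros continuous_on_U s) auto
  moreover have "norm (g \<xi>) \<le> M * ((520 + 16 * \<bar>x\<bar>) * B / L^2)" if "\<xi> \<in> cbox (-L) L" for \<xi>
  proof -
    have "\<bar>\<xi>\<bar> \<le> L" using that by auto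
    then have "\<bar>cutoff_dxxx L \<xi> * heat_kernel (T - s) (x - \<xi>) +
        3 * cutoff_dxx L \<xi> * (- heat_kernel_dx (T - s) (x - \<xi>)) +
        2 * cutoff_dx L \<xi> * heat_kernel_dxx (T - s) (x - \<xi>)\<bar> \<le> (520 + 16 * \<bar>x\<bar>) * B / L^2"
      using B[of \<xi>] by (intro abs_cutoff_heat_kernel_terms_le L t) auto
    then show ?thesis
      unfolding g_def real_norm_def abs_mult using M_nonneg by (intro mult_mono U_bounded s) auto
  qed
  ultimately have "norm (integral {-L..L} g) \<le> M * ((520 + 16 * \<bar>x\<bar>) * B / L^2) * measure lborel (cbox (-L) L)"
    using M_nonneg B0 by (intro has_integral_bound) auto
  also have "\<dots> = 2 * M * ((520 + 16 * \<bar>x\<bar>) * B) / L"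
    using L0 by (simp add: power2_eq_square field_simps)
  finally have "\<bar>integral {-L..L} g\<bar> \<le> 2 * M * ((520 + 16 * \<bar>x\<bar>) * B) / L" by simp
  moreover have "integral {-L..L} (\<lambda>\<xi>. ut \<xi> s * (cutoff L \<xi> * heat_kernel (T - s) (x - \<xi>)) -
      u \<xi> s * (cutoff L \<xi> * heat_kernel_dxx (T - s) (x - \<xi>))) = - integral {-L..L} g"
    unfolding g_def by (rule cutoff_propagated_derivative_eq[OF s L0])
  ultimately show ?thesis by simp
qed

lemma cutoff_propagated_lipschitz:
  assumes "0 < a" "a \<le> b" "b < T"
  obtains C where "\<And>L. L \<ge> 1 \<Longrightarrow>
    \<bar>cutoff_propagated T x L b - cutoff_propagated T x L a\<bar> \<le> C / L * (b - a)"
proof -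
  obtain B where B: "\<And>t y. T - b \<le> t \<Longrightarrow> t \<le> T \<Longrightarrow> heat_kernel t y \<le> B \<and>
      \<bar>heat_kernel_dx t y\<bar> \<le> B \<and> (1 + \<bar>y\<bar>) * \<bar>heat_kernel_dxx t y\<bar> \<le> B"
    using heat_kernel_derivatives_uniformly_bounded[of "T - b" T] assms by auto
  define C where "C = 2 * M * ((520 + 16 * \<bar>x\<bar>) * B)"
  have "\<bar>cutoff_propagated T x L b - cutoff_propagated T x L a\<bar> \<le> C / L * (b - a)" if L: "L \<ge> 1" for L
  proof -
    define D where "D s = integral {-L..L} (\<lambda>\<xi>. ut \<xi> s * (cutoff L \<xi> * heat_kernel (T - s) (x - \<xi>)) -
        u \<xi> s * (cutoff L \<xi> * heat_kernel_dxx (T - s) (x - \<xi>)))" for s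
    have "norm (cutoff_propagated T x L b - cutoff_propagated T x L a) \<le> C / L * norm (b - a)"
    proof (rule field_differentiable_bound[OF convex_real_interval(5)])
      fix s assume "s \<in> {a..b}"
      then have s: "0 < s" "s < T" "T - b \<le> T - s" "T - s \<le> T" using assms by auto
      show "(cutoff_propagated T x L has_field_derivative D s) (at s within {a..b})"
        unfolding D_def by (rule has_field_derivative_at_within[OF has_real_derivative_cutoff_propagated[OF s(1,2)]])
      show "norm (D s) \<le> C / L"
        unfolding C_def D_def real_norm_def
        by (rule abs_cutoff_propagated_derivative_le[OF s(1,2) L]) (use B s(3,4) in blast)
    qed (use assms in auto)
    then show ?thesis using assms by simp
  qed
  then show thesis by (rule that)
qed

lemma cutoff_propagated_tendsto:
  assumes s: "0 < s" "s < T"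
  shows "(\<lambda>n. cutoff_propagated T x (real n + 1) s) \<longlonglongrightarrow> propagated T x s"
proof -
  have t: "T - s > 0" using s by simp
  have "(\<lambda>n. integral {-(real n + 1)..real n + 1}
      (\<lambda>\<xi>. U s \<xi> * (cutoff (real n + 1) \<xi> * heat_kernel_dx (T - s) (x - \<xi>))) -
      integral {-(real n + 1)..real n + 1}
      (\<lambda>\<xi>. U s \<xi> * (cutoff_dx (real n + 1) \<xi> * heat_kernel (T - s) (x - \<xi>))))
      \<longlonglongrightarrow> propagated T x s - 0"
    unfolding propagated_def using U_bounded[OF s(1)]
    by (intro tendsto_diff tendsto_integral_cutoff_heat_kernel_dx tendsto_integral_cutoff_dx_heat_kernel
        continuous_on_U t s)
  then show ?thesis using cutoff_propagated_eq[OF s] by simp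
qed

lemma propagated_eq:
  assumes "0 < a" "a \<le> b" "b < T"
  shows "propagated T x a = propagated T x b"
proof -
  obtain C where C: "\<And>L. L \<ge> 1 \<Longrightarrow>
      \<bar>cutoff_propagated T x L b - cutoff_propagated T x L a\<bar> \<le> C / L * (b - a)"
    using cutoff_propagated_lipschitz[OF assms] by blast
  have "(\<lambda>n. cutoff_propagated T x (real n + 1) b - cutoff_propagated T x (real n + 1) a)
      \<longlonglongrightarrow> propagated T x b - propagated T x a"
    using assms by (intro tendsto_diff cutoff_propagated_tendsto) auto
  moreover have "(\<lambda>n. cutoff_propagated T x (real n + 1) b - cutoff_propagated T x (real n + 1) a)
      \<longlonglongrightarrow> 0"
  proof (rule Lim_null_comparison)
    show "eventually (\<lambda>n. norm (cutoff_propagated T x (real n + 1) b - cutoff_propagated T x (real n + 1) a)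
        \<le> C / (real n + 1) * (b - a)) sequentially"
      using C by (intro always_eventually allI) simp
    show "(\<lambda>n. C / (real n + 1) * (b - a)) \<longlonglongrightarrow> 0" by real_asymp
  qed
  ultimately show ?thesis using LIMSEQ_unique by fastforce
qed

lemma propagated_tendsto_final:
  assumes T: "T > 0" shows "(propagated T x \<longlongrightarrow> u x T) (at_left T)"
proof (rule tendstoI)
  fix e :: real assume "e > 0"
  define \<epsilon> where "\<epsilon> = e / 3"
  have \<epsilon>: "\<epsilon> > 0" using \<open>e > 0\<close> by (simp add: \<epsilon>_def)
  obtain d where d: "d > 0" and u_close: "\<And>p. p \<in> UNIV \<times> {0<..} \<Longrightarrow> dist p (x, T) < d \<Longrightarrow>
      dist ((\<lambda>(x, t). u x t) p) ((\<lambda>(x, t). u x t) (x, T)) < \<epsilon>"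
    using cont_u[unfolded continuous_on_iff] T \<epsilon> by (metis SigmaI UNIV_I greaterThan_iff)
  define \<delta> where "\<delta> = min (d / 3) (T / 2)"
  have \<delta>: "\<delta> > 0" "\<delta> \<le> d / 3" "\<delta> \<le> T / 2" using d T by (auto simp: \<delta>_def)
  have close: "\<bar>u \<zeta> b - u x T\<bar> \<le> \<epsilon>" if "\<bar>\<zeta> - x\<bar> \<le> \<delta>" "T - \<delta> < b" "b < T" for \<zeta> b
  proof -
    have "dist (\<zeta>, b) (x, T) \<le> dist \<zeta> x + dist b T"
      unfolding dist_Pair_Pair by (rule sqrt_sum_squares_le_sum) auto
    also have "\<dots> < d" using that \<delta> d by (auto simp: dist_real_def)
    finally show ?thesis using u_close[of "(\<zeta>, b)"] that \<delta> by (auto simp: dist_real_def)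
  qed
  define D where "D = 2 * M / \<delta>^2 + \<bar>u x T\<bar> / \<delta>"
  have "((\<lambda>b. D * (2 * sqrt (2 * (T - b)) * sqrt (2 / pi))) \<longlongrightarrow>
      D * (2 * sqrt (2 * (T - T)) * sqrt (2 / pi))) (at_left T)"
    by (intro tendsto_intros)
  then have "eventually (\<lambda>b. D * (2 * sqrt (2 * (T - b)) * sqrt (2 / pi)) < \<epsilon>) (at_left T)"
    using \<epsilon> by (intro order_tendstoD(2)) auto
  moreover have "eventually (\<lambda>b. T - \<delta> < b \<and> b < T) (at_left T)"
    using eventually_at_left_real[of "T - \<delta>" T] \<delta> by (simp add: eventually_mono)
  ultimately show "eventually (\<lambda>b. dist (propagated T x b) (u x T) < e) (at_left T)"
  proof eventually_elim
    case (elim b)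
    then have b: "b > 0" "T - b > 0" using \<delta> by auto
    have "\<bar>propagated T x b - u x T\<bar> \<le> \<epsilon> + D * (2 * sqrt (2 * (T - b)) * sqrt (2 / pi))"
      unfolding propagated_def D_def
      by (rule abs_integral_heat_kernel_dx_sub_le[OF b(2) der_U[OF b(1)] U_bounded[OF b(1)] \<delta>(1)])
         (use close elim in auto)
    then show ?case using elim by (simp add: dist_real_def \<epsilon>_def)
  qed
qed

lemma solution_eq_integral_heat_kernel_dx:
  assumes T: "T > 0" shows "u x T = (\<integral>\<xi>. f \<xi> * heat_kernel_dx T (x - \<xi>) \<partial>lborel)"
proof -
  define c where "c = propagated T x (T / 2)"
  have "propagated T x s = c" if "0 < s" "s < T" for s
    using propagated_eq[of s "T / 2" T x] propagated_eq[of "T / 2" s T x] that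
    by (cases "s \<le> T / 2") (auto simp: c_def)
  then have "eventually (\<lambda>s. propagated T x s = c) (at_right 0)"
    "eventually (\<lambda>s. propagated T x s = c) (at_left T)"
    using eventually_at_right_real[OF T] eventually_at_left_real[OF T] by (auto elim!: eventually_mono)
  then have "(propagated T x \<longlongrightarrow> c) (at_right 0)" "(propagated T x \<longlongrightarrow> c) (at_left T)"
    by (auto intro: tendsto_eventually)
  moreover have "(propagated T x \<longlongrightarrow> (\<integral>\<xi>. f \<xi> * heat_kernel_dx T (x - \<xi>) \<partial>lborel)) (at_right 0)"
    unfolding propagated_def[abs_def] using borel_measurable_continuous_onI[OF f_cont]
    by (intro tendsto_integral_heat_kernel_dx_at_right[where M=M] T U_bounded U_initial U_measurable)
  ultimately show ?thesis
    using propagated_tendsto_final[OF T, of x]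
    by (metis tendsto_unique trivial_limit_at_left_real trivial_limit_at_right_real)
qed

end

theorem theorem6p3:
  fixes u ux uxx ut :: "real \<Rightarrow> real \<Rightarrow> real" and Ff :: "real \<Rightarrow> real"
  assumes cont_u: "continuous_on (UNIV \<times> {0<..}) (\<lambda>(x, t). u x t)"
    and cont_ux: "continuous_on (UNIV \<times> {0<..}) (\<lambda>(x, t). ux x t)"
    and cont_uxx: "continuous_on (UNIV \<times> {0<..}) (\<lambda>(x, t). uxx x t)"
    and cont_ut: "continuous_on (UNIV \<times> {0<..}) (\<lambda>(x, t). ut x t)"
    and der_x: "\<And>x t. t > 0 \<Longrightarrow> ((\<lambda>y. u y t) has_real_derivative ux x t) (at x)"
    and der_xx: "\<And>x t. t > 0 \<Longrightarrow> ((\<lambda>y. ux y t) has_real_derivative uxx x t) (at x)"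
    and der_t: "\<And>x t. t > 0 \<Longrightarrow> ((\<lambda>s. u x s) has_real_derivative ut x t) (at t)"
    and heat: "\<And>x t. t > 0 \<Longrightarrow> ut x t - uxx x t = 0"
    and in_A: "\<And>t. t > 0 \<Longrightarrow> in_Ac (\<lambda>x. u x t)"
    and bdd: "\<exists>M. \<forall>t>0. alex_norm (primitive (\<lambda>x. u x t)) \<le> M"
    and f_A: "Ff \<in> Bc"
    and init: "((\<lambda>t. alex_norm (\<lambda>x. primitive (\<lambda>y. u y t) x - Ff x)) \<longlongrightarrow> 0) (at_right 0)"
  shows "\<forall>x. \<forall>t>0. u x t = Ac_conv Ff (heat_kernel t) x"
proof -
  obtain M where M: "\<And>t. t > 0 \<Longrightarrow> alex_norm (primitive (\<lambda>x. u x t)) \<le> M" using bdd by blast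
  define U where "U t = primitive (\<lambda>x. u x t)" for t
  have U: "U t \<in> Bc" "(U t has_real_derivative u x t) (at x)" if "t > 0" for t x
    using Ac_primitive_primitive[OF in_A[OF that]] by (simp_all add: Ac_primitive_def U_def)
  have bounded: "\<bar>U t x\<bar> \<le> M" if "t > 0" for t x
    using order_trans[OF abs_le_alex_norm[OF U(1)[OF that]] M[OF that, folded U_def]] .
  have "eventually (\<lambda>t. U t \<in> Bc) (at_right 0)"
    using eventually_at_right_less by eventually_elim (rule U(1))
  then have initial: "((\<lambda>t. U t x) \<longlongrightarrow> Ff x) (at_right 0)" for x
    using init unfolding U_def[symmetric] by (rule tendsto_of_alex_norm_tendsto[OF _ f_A])
  interpret heat_solution u ux uxx ut U M Ff
    using cont_u cont_uxx cont_ut der_x der_xx der_t heat U(2) bounded initial f_A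
    by unfold_locales (auto simp: Bc_def)
  show ?thesis
    using solution_eq_integral_heat_kernel_dx Ac_conv_heat_kernel[OF f_A] by simp
qed

end
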